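(* For any natural number $n \geq 1$, $\{\omega \cdot (n+1), \omega^\star \cdot (n+1)\} \leq_c \{\omega^2 \cdot n, (\omega^2)^\star \cdot n\}$.
   Context: Structures have domains contained in $\omega$. For countable structures $\mathcal{A},\mathcal{B}$, the class $\{\mathcal{A},\mathcal{B}\}$ denotes the class of all structures (with domain $\subseteq\omega$) isomorphic to $\mathcal{A}$ or to $\mathcal{B}$. Linear orders are in the language $\{<\}$; $L^\star$ is the reverse of a linear order $L$; $\omega\cdot (n+1)$, $\omega^2\cdot n$ are ordinal order types. An enumeration operator $\Gamma$ is a c.e. set of pairs $(\alpha,\varphi)$ with $\alpha$ a finite set of basic (atomic or negated atomic) sentences of the input language with constants from $\omega$ and $\varphi$ a basic sentence of the output language with constants from $\omega$; $\Gamma(X)=\{\varphi : (\alpha,\varphi)\in\Gamma,\ \alpha\subseteq X\}$. $\Gamma$ is a computable embedding of $\mathcal{K}_0$ into $\mathcal{K}_1$ ($\mathcal{K}_0\leq_c\mathcal{K}_1$) if for every $\mathcal{A}\in\mathcal{K}_0$, $\Gamma$ applied to the atomic diagram of $\mathcal{A}$ is the atomic diagram of a structure $\Gamma(\mathcal{A})\in\mathcal{K}_1$, and for all $\mathcal{A},\mathcal{B}\in\mathcal{K}_0$, $\mathcal{A}\cong\mathcal{B}$ iff $\Gamma(\mathcal{A})\cong\Gamma(\mathcal{B})$. *)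

theory Defs
  imports Main "HOL-Library.Nat_Bijection"
begin

datatype recf = Zf | Sf | Proj nat | Comp recf "recf list" | Prim recf recf | Mn recf

inductive eval :: "recf \<Rightarrow> nat list \<Rightarrow> nat \<Rightarrow> bool" where
  eval_Z: "eval Zf xs 0"
| eval_S: "eval Sf (x # xs) (Suc x)"
| eval_Proj: "i < length xs \<Longrightarrow> eval (Proj i) xs (xs ! i)"
| eval_Comp: "list_all2 (\<lambda>g y. eval g xs y) gs ys \<Longrightarrow> eval f ys z \<Longrightarrow> eval (Comp f gs) xs z"
| eval_Prim0: "eval f xs z \<Longrightarrow> eval (Prim f g) (0 # xs) z"
| eval_PrimS: "eval (Prim f g) (n # xs) y \<Longrightarrow> eval g (y # n # xs) z
               \<Longrightarrow> eval (Prim f g) (Suc n # xs) z"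
| eval_Mn: "eval f (n # xs) 0 \<Longrightarrow> (\<forall>m<n. \<exists>k. eval f (m # xs) (Suc k))
               \<Longrightarrow> eval (Mn f) xs n"

definition ce :: "nat set \<Rightarrow> bool" where
  "ce A \<longleftrightarrow> (\<exists>f. \<forall>x. x \<in> A \<longleftrightarrow> (\<exists>y. eval f [x] y))"

datatype bsent = Eq nat nat | Lt nat nat | NEq nat nat | NLt nat nat

fun bs_code :: "bsent \<Rightarrow> nat" where
  "bs_code (Eq a b) = 4 * prod_encode (a, b)"
| "bs_code (Lt a b) = 4 * prod_encode (a, b) + 1"
| "bs_code (NEq a b) = 4 * prod_encode (a, b) + 2"
| "bs_code (NLt a b) = 4 * prod_encode (a, b) + 3"

text \<open>A structure in the language {<}: a domain D \<subseteq> omega and an interpretation of <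
  (only its restriction to D matters).\<close>
type_synonym lstr = "nat set \<times> (nat \<Rightarrow> nat \<Rightarrow> bool)"

definition diag :: "lstr \<Rightarrow> bsent set" where
  "diag A = (let D = fst A; R = snd A in
      {Eq a b | a b. a \<in> D \<and> b \<in> D \<and> a = b}
    \<union> {NEq a b | a b. a \<in> D \<and> b \<in> D \<and> a \<noteq> b}
    \<union> {Lt a b | a b. a \<in> D \<and> b \<in> D \<and> R a b}
    \<union> {NLt a b | a b. a \<in> D \<and> b \<in> D \<and> \<not> R a b})"

definition iso :: "lstr \<Rightarrow> lstr \<Rightarrow> bool" where
  "iso A B \<longleftrightarrow> (\<exists>h. bij_betw h (fst A) (fst B) \<and>
      (\<forall>x\<in>fst A. \<forall>y\<in>fst A. snd A x y \<longleftrightarrow> snd B (h x) (h y)))"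

text \<open>The class {A, B}: all structures with domain \<subseteq> omega isomorphic to A or to B.\<close>
definition cls2 :: "lstr \<Rightarrow> lstr \<Rightarrow> lstr set" where
  "cls2 A B = {C. iso C A \<or> iso C B}"

definition enum_op :: "(bsent set \<times> bsent) set \<Rightarrow> bool" where
  "enum_op \<Gamma> \<longleftrightarrow> (\<forall>(\<alpha>, \<phi>)\<in>\<Gamma>. finite \<alpha>) \<and>
     ce {prod_encode (set_encode (bs_code ` \<alpha>), bs_code \<phi>) | \<alpha> \<phi>. (\<alpha>, \<phi>) \<in> \<Gamma>}"

definition apply_op :: "(bsent set \<times> bsent) set \<Rightarrow> bsent set \<Rightarrow> bsent set" where
  "apply_op \<Gamma> X = {\<phi>. \<exists>\<alpha>. (\<alpha>, \<phi>) \<in> \<Gamma> \<and> \<alpha> \<subseteq> X}"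

definition comp_embedding :: "(bsent set \<times> bsent) set \<Rightarrow> lstr set \<Rightarrow> lstr set \<Rightarrow> bool" where
  "comp_embedding \<Gamma> K0 K1 \<longleftrightarrow> enum_op \<Gamma> \<and>
     (\<forall>A\<in>K0. \<exists>B\<in>K1. apply_op \<Gamma> (diag A) = diag B) \<and>
     (\<forall>A\<in>K0. \<forall>B\<in>K0. \<forall>A' B'. apply_op \<Gamma> (diag A) = diag A' \<longrightarrow> apply_op \<Gamma> (diag B) = diag B'
         \<longrightarrow> (iso A B \<longleftrightarrow> iso A' B'))"

definition comp_reducible :: "lstr set \<Rightarrow> lstr set \<Rightarrow> bool" (infix "\<le>\<^sub>c" 50) where
  "K0 \<le>\<^sub>c K1 \<longleftrightarrow> (\<exists>\<Gamma>. comp_embedding \<Gamma> K0 K1)"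

definition omega_lo :: lstr where
  "omega_lo = (UNIV, (<))"

definition omega2_lo :: lstr where
  "omega2_lo = (UNIV, \<lambda>a b. case prod_decode a of (i, x) \<Rightarrow> case prod_decode b of (j, y) \<Rightarrow>
                      i < j \<or> (i = j \<and> x < y))"

definition rev_lo :: "lstr \<Rightarrow> lstr" where
  "rev_lo L = (fst L, \<lambda>x y. snd L y x)"

text \<open>L \<cdot> m: m consecutive copies of L (ordinal product with m).\<close>
definition times_lo :: "lstr \<Rightarrow> nat \<Rightarrow> lstr" where
  "times_lo L m = ({prod_encode (i, x) | i x. i < m \<and> x \<in> fst L},
     \<lambda>a b. case prod_decode a of (i, x) \<Rightarrow> case prod_decode b of (j, y) \<Rightarrow>
        i < j \<or> (i = j \<and> snd L x y))"

end

theory Submission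
  imports Defs "HOL-Library.Infinite_Set"
begin

text \<open>The operator \<open>\<Gamma>\<close> sends a linear order \<open>A\<close> to the pairs \<open>(x, y)\<close> of points such that some
  point \<open>z\<close>, larger than \<open>y\<close> as a natural number, lies on the other side of \<open>x\<close> than \<open>y\<close>;
  the pairs are ordered lexicographically by \<open>A\<close>. Membership of a pair is witnessed by two
  atomic facts, so \<open>\<Gamma>\<close> is an enumeration operator, and it commutes with reversal.

  Let \<open>A \<cong> \<omega> \<cdot> (n + 1)\<close>. A point \<open>x\<close> outside the first block has unboundedly large points on
  both sides, so every \<open>y \<noteq> x\<close> is paired with it and the fibre over \<open>x\<close> is \<open>n + 1\<close> copies of
  \<open>\<omega>\<close>. A point of the first block has only finitely many points to its left, so it is paired
  with finitely many \<open>y\<close>, and these fibres together form a single \<open>\<omega>\<close>. Hence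
  \<open>\<Gamma>(A) \<cong> \<omega> + \<omega> \<cdot> \<omega> \<cdot> n = \<omega>\<^sup>2 \<cdot> n\<close>, and dually \<open>\<Gamma>(A) \<cong> (\<omega>\<^sup>2)\<^sup>* \<cdot> n\<close> for \<open>A \<cong> \<omega>\<^sup>* \<cdot> (n + 1)\<close>.
  The two possible images are told apart by the existence of a least element, so \<open>\<Gamma>\<close> also
  reflects isomorphism.\<close>

section \<open>Partial recursive evaluation of arithmetic expressions\<close>

lemma list_all2_unique:
  "list_all2 (\<lambda>g y. P g y \<and> (\<forall>y'. P g y' \<longrightarrow> y = y')) gs ys \<Longrightarrow> list_all2 P gs ys' \<Longrightarrow> ys = ys'"
proof (induction gs arbitrary: ys ys')
  case (Cons g gs)
  then obtain y ys0 y' ys0' where "ys = y # ys0" "ys' = y' # ys0'"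
    by (auto simp: list_all2_Cons1)
  with Cons show ?case by auto
qed simp

lemma eval_deterministic: "eval f xs y \<Longrightarrow> eval f xs y' \<Longrightarrow> y = y'"
proof (induction arbitrary: y' rule: eval.induct)
  case (eval_Comp xs gs ys f z)
  from eval_Comp.prems obtain ys' where "list_all2 (\<lambda>g y. eval g xs y) gs ys'" "eval f ys' y'"
    by (cases rule: eval.cases) auto
  with list_all2_unique[OF eval_Comp.IH(1)] eval_Comp.IH(2) show ?case by simp
next
  case (eval_Prim0 f xs z g)
  from eval_Prim0.prems show ?case by (cases rule: eval.cases) (auto simp: eval_Prim0.IH)
next
  case (eval_PrimS f g n xs y z)
  from eval_PrimS.prems show ?case by (cases rule: eval.cases) (auto dest: eval_PrimS.IH)
next
  case (eval_Mn f n xs)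
  from eval_Mn.prems obtain n' where "y' = n'" "eval f (n' # xs) 0" "\<forall>m<n'. \<exists>k. eval f (m # xs) (Suc k)"
    by (cases rule: eval.cases) auto
  then have n': "eval f (y' # xs) 0" "\<forall>m<y'. \<exists>k. eval f (m # xs) (Suc k)" by simp_all
  show ?case
  proof (rule linorder_cases[of n y'])
    assume "n < y'"
    then show ?thesis using n'(2) eval_Mn.IH(1) by fastforce
  next
    assume "y' < n"
    then show ?thesis using n'(1) eval_Mn.IH(2) by fastforce
  qed
qed (auto elim: eval.cases)

definition add_rf :: recf where "add_rf = Prim (Proj 0) (Comp Sf [Proj 0])"
definition mul_rf :: recf where "mul_rf = Prim Zf (Comp add_rf [Proj 0, Proj 2])"
definition pred_rf :: recf where "pred_rf = Prim Zf (Proj 1)"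
definition rsub_rf :: recf where "rsub_rf = Prim (Proj 0) (Comp pred_rf [Proj 0])"
definition sub_rf :: recf where "sub_rf = Comp rsub_rf [Proj 1, Proj 0]"

fun const_rf :: "nat \<Rightarrow> recf" where
  "const_rf 0 = Zf"
| "const_rf (Suc n) = Comp Sf [const_rf n]"

definition pow2_rf :: recf where "pow2_rf = Prim (const_rf 1) (Comp add_rf [Proj 0, Proj 0])"

lemma eval_ProjI: "i < length xs \<Longrightarrow> xs ! i = y \<Longrightarrow> eval (Proj i) xs y"
  using eval_Proj by blast

lemma eval_Comp1: "eval g xs y \<Longrightarrow> eval f [y] z \<Longrightarrow> eval (Comp f [g]) xs z"
  by (rule eval_Comp[where ys="[y]"]) simp_all

lemma eval_Comp2:
  "eval g\<^sub>1 xs y\<^sub>1 \<Longrightarrow> eval g\<^sub>2 xs y\<^sub>2 \<Longrightarrow> eval f [y\<^sub>1, y\<^sub>2] z \<Longrightarrow> eval (Comp f [g\<^sub>1, g\<^sub>2]) xs z"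
  by (rule eval_Comp[where ys="[y\<^sub>1, y\<^sub>2]"]) simp_all

lemma eval_const_rf: "eval (const_rf n) xs n"
  by (induction n) (auto intro: eval_Z eval_Comp1 eval_S)

lemma eval_add_rf: "eval add_rf [a, b] (a + b)"
  unfolding add_rf_def
proof (induction a)
  case 0 show ?case using eval_Prim0[OF eval_Proj[of 0 "[b]"]] by simp
next
  case (Suc a)
  have "eval (Comp Sf [Proj 0]) [a + b, a, b] (Suc (a + b))"
    by (rule eval_Comp1[OF _ eval_S]) (simp add: eval_ProjI)
  then show ?case using eval_PrimS[OF Suc] by simp
qed

lemma eval_mul_rf: "eval mul_rf [a, b] (a * b)"
  unfolding mul_rf_def
proof (induction a)
  case 0 show ?case using eval_Prim0[OF eval_Z] by simp
next
  case (Suc a)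
  have "eval (Comp add_rf [Proj 0, Proj 2]) [a * b, a, b] (a * b + b)"
    by (rule eval_Comp2[OF _ _ eval_add_rf]) (simp_all add: eval_ProjI)
  then show ?case using eval_PrimS[OF Suc] by (simp add: add.commute)
qed

lemma eval_pred_rf: "eval pred_rf [a] (a - 1)"
  unfolding pred_rf_def
proof (induction a)
  case 0 show ?case using eval_Prim0[OF eval_Z] by simp
next
  case (Suc a)
  have "eval (Proj 1) [a - 1, a] a" by (simp add: eval_ProjI)
  then show ?case using eval_PrimS[OF Suc] by simp
qed

lemma eval_rsub_rf: "eval rsub_rf [b, a] (a - b)"
  unfolding rsub_rf_def
proof (induction b)
  case 0 show ?case using eval_Prim0[OF eval_Proj[of 0 "[a]"]] by simp
next
  case (Suc b)
  have "eval (Comp pred_rf [Proj 0]) [a - b, b, a] (a - b - 1)"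
    by (rule eval_Comp1[OF _ eval_pred_rf]) (simp add: eval_ProjI)
  then show ?case using eval_PrimS[OF Suc] by simp
qed

lemma eval_sub_rf: "eval sub_rf [a, b] (a - b)"
  unfolding sub_rf_def by (rule eval_Comp2[OF _ _ eval_rsub_rf]) (simp_all add: eval_ProjI)

lemma eval_pow2_rf: "eval pow2_rf [a] (2 ^ a)"
  unfolding pow2_rf_def
proof (induction a)
  case 0 show ?case using eval_Prim0[OF eval_const_rf[of 1 "[]"]] by simp
next
  case (Suc a)
  have "eval (Comp add_rf [Proj 0, Proj 0]) [2 ^ a, a] (2 ^ a + 2 ^ a)"
    by (rule eval_Comp2[OF _ _ eval_add_rf]) (simp_all add: eval_ProjI)
  then show ?case using eval_PrimS[OF Suc] by (simp add: mult_2)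
qed

datatype aexp = V nat | C nat | Add aexp aexp | Mul aexp aexp | Sub aexp aexp | Pow2 aexp
  | Sum nat aexp aexp

fun aval :: "aexp \<Rightarrow> (nat \<Rightarrow> nat) \<Rightarrow> nat" where
  "aval (V v) r = r v"
| "aval (C n) r = n"
| "aval (Add a b) r = aval a r + aval b r"
| "aval (Mul a b) r = aval a r * aval b r"
| "aval (Sub a b) r = aval a r - aval b r"
| "aval (Pow2 a) r = 2 ^ aval a r"
| "aval (Sum v b e) r = (\<Sum>i<aval b r. aval e (r(v := i)))"

fun avars :: "aexp \<Rightarrow> nat set" where
  "avars (V v) = {v}"
| "avars (C n) = {}"
| "avars (Add a b) = avars a \<union> avars b"
| "avars (Mul a b) = avars a \<union> avars b"
| "avars (Sub a b) = avars a \<union> avars b"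
| "avars (Pow2 a) = avars a"
| "avars (Sum v b e) = avars b \<union> (avars e - {v})"

lemma aval_cong: "\<forall>w\<in>avars e. r w = r' w \<Longrightarrow> aval e r = aval e r'"
proof (induction e arbitrary: r r')
  case (Sum v b e)
  have "aval b r = aval b r'" using Sum by auto
  moreover have "aval e (r(v := i)) = aval e (r'(v := i))" for i using Sum by auto
  ultimately show ?case by simp
qed (auto simp: Un_iff, (metis UnCI)+)

lemma aval_upd [simp]: "v \<notin> avars e \<Longrightarrow> aval e (r(v := i)) = aval e r"
  by (rule aval_cong) auto

fun var_index :: "nat list \<Rightarrow> nat \<Rightarrow> nat" where
  "var_index [] v = 0"
| "var_index (w # ws) v = (if w = v then 0 else Suc (var_index ws v))"

lemma var_index_less: "v \<in> set vs \<Longrightarrow> var_index vs v < length vs"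
  by (induction vs) auto

lemma eval_Proj_list:
  assumes "d + k \<le> length ws"
  shows "list_all2 (\<lambda>g z. eval g ws z) (map (\<lambda>i. Proj (i + d)) [0..<k]) (map (\<lambda>i. ws ! (i + d)) [0..<k])"
  using assms by (auto simp: list_all2_conv_all_nth intro: eval_Proj)

text \<open>The step function receives the partial sum, the counter and the \<open>k\<close> remaining arguments,
  and calls \<open>B\<close> on the counter followed by the remaining arguments.\<close>

definition sum_rf :: "recf \<Rightarrow> nat \<Rightarrow> recf" where
  "sum_rf B k = Prim Zf (Comp add_rf [Proj 0, Comp B (Proj 1 # map (\<lambda>i. Proj (i + 2)) [0..<k])])"

lemma eval_sum_rf:
  assumes "length xs = k" and body: "\<And>i. eval B (i # xs) (g i)"
  shows "eval (sum_rf B k) (m # xs) (\<Sum>i<m. g i)"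
proof -
  have args: "list_all2 (\<lambda>g z. eval g (y # i # xs) z) (Proj 1 # map (\<lambda>i. Proj (i + 2)) [0..<k]) (i # xs)"
    for y i
  proof -
    have "map (\<lambda>j. (y # i # xs) ! (j + 2)) [0..<k] = xs"
      using assms(1) by (auto intro: nth_equalityI)
    then show ?thesis
      using eval_Proj_list[of 2 k "y # i # xs"] eval_Proj[of 1 "y # i # xs"] assms(1) by simp
  qed
  have step: "eval (Comp add_rf [Proj 0, Comp B (Proj 1 # map (\<lambda>i. Proj (i + 2)) [0..<k])])
      (y # i # xs) (y + g i)" for y i
    by (rule eval_Comp2[OF _ eval_Comp[OF args body] eval_add_rf]) (simp add: eval_ProjI)
  show ?thesis
    unfolding sum_rf_def
  proof (induction m)
    case 0 show ?case using eval_Prim0[OF eval_Z] by simp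
  next
    case (Suc m) show ?case using eval_PrimS[OF Suc step] by (simp only: sum.lessThan_Suc)
  qed
qed

fun compile :: "nat list \<Rightarrow> aexp \<Rightarrow> recf" where
  "compile vs (V v) = Proj (var_index vs v)"
| "compile vs (C n) = const_rf n"
| "compile vs (Add a b) = Comp add_rf [compile vs a, compile vs b]"
| "compile vs (Mul a b) = Comp mul_rf [compile vs a, compile vs b]"
| "compile vs (Sub a b) = Comp sub_rf [compile vs a, compile vs b]"
| "compile vs (Pow2 a) = Comp pow2_rf [compile vs a]"
| "compile vs (Sum v b e) =
     Comp (sum_rf (compile (v # vs) e) (length vs)) (compile vs b # map Proj [0..<length vs])"

lemma eval_compile:
  "avars e \<subseteq> set vs \<Longrightarrow> length xs = length vs \<Longrightarrow> (\<forall>w\<in>set vs. xs ! var_index vs w = r w)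
   \<Longrightarrow> eval (compile vs e) xs (aval e r)"
proof (induction e arbitrary: vs xs r)
  case (V v)
  then show ?case using eval_Proj[of "var_index vs v" xs] var_index_less[of v vs] by auto
next
  case (Sum v b e)
  have "eval (compile (v # vs) e) (i # xs) (aval e (r(v := i)))" for i
  proof (rule Sum.IH(2))
    show "avars e \<subseteq> set (v # vs)" using Sum.prems(1) by auto
    show "length (i # xs) = length (v # vs)" using Sum.prems(2) by simp
    show "\<forall>w\<in>set (v # vs). (i # xs) ! var_index (v # vs) w = (r(v := i)) w"
      using Sum.prems(3) by auto
  qed
  from eval_sum_rf[OF Sum.prems(2) this]
  have "eval (sum_rf (compile (v # vs) e) (length vs)) (m # xs) (\<Sum>i<m. aval e (r(v := i)))" for m .
  moreover have "eval (compile vs b) xs (aval b r)" using Sum by auto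
  moreover have "list_all2 (\<lambda>g z. eval g xs z) (map Proj [0..<length xs]) xs"
    using eval_Proj_list[of 0 "length xs" xs] by (simp add: map_nth)
  ultimately show ?case
    using Sum.prems(2) by (auto intro!: eval_Comp[where ys="aval b r # xs"])
next
  case (Add a b)
  then show ?case by (auto intro!: eval_Comp[where ys="[aval a r, aval b r]"] eval_add_rf)
next
  case (Mul a b)
  then show ?case by (auto intro!: eval_Comp[where ys="[aval a r, aval b r]"] eval_mul_rf)
next
  case (Sub a b)
  then show ?case by (auto intro!: eval_Comp[where ys="[aval a r, aval b r]"] eval_sub_rf)
next
  case (Pow2 a)
  then show ?case by (auto intro!: eval_Comp[where ys="[aval a r]"] eval_pow2_rf)
qed (simp add: eval_const_rf)

text \<open>Unbounded search for a zero of \<open>E\<close> in a dummy variable terminates exactly on the set.\<close>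

lemma ce_if_zero_set_of_aexp:
  assumes "avars E \<subseteq> {0}" and "\<And>x. x \<in> S \<longleftrightarrow> aval E (\<lambda>_. x) = 0"
  shows "ce S"
proof -
  let ?f = "compile [1, 0] E"
  have eval_f: "eval ?f [m, x] (aval E (\<lambda>_. x))" for m x
  proof -
    have "eval ?f [m, x] (aval E (\<lambda>w. if w = 0 then x else m))"
      by (rule eval_compile) (use assms(1) in auto)
    moreover have "aval E (\<lambda>w. if w = 0 then x else m) = aval E (\<lambda>_. x)"
      by (rule aval_cong) (use assms(1) in auto)
    ultimately show ?thesis by simp
  qed
  have "x \<in> S \<longleftrightarrow> (\<exists>y. eval (Mn ?f) [x] y)" for x
  proof
    assume "x \<in> S"
    then have "eval ?f [0, x] 0" using eval_f[of 0 x] assms(2) by simp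
    then show "\<exists>y. eval (Mn ?f) [x] y" by (auto intro!: eval_Mn)
  next
    assume "\<exists>y. eval (Mn ?f) [x] y"
    then obtain y where "eval (Mn ?f) [x] y" by blast
    then have "eval ?f [y, x] 0" by (cases rule: eval.cases) auto
    then have "aval E (\<lambda>_. x) = 0" using eval_deterministic eval_f by blast
    then show "x \<in> S" using assms(2) by simp
  qed
  then show ?thesis unfolding ce_def by blast
qed

section \<open>Arithmetical coding of pairs and finite sets of sentences\<close>

abbreviation pair :: "nat \<Rightarrow> nat \<Rightarrow> nat" where "pair x y \<equiv> prod_encode (x, y)"
abbreviation pfst :: "nat \<Rightarrow> nat" where "pfst a \<equiv> fst (prod_decode a)"
abbreviation psnd :: "nat \<Rightarrow> nat" where "psnd a \<equiv> snd (prod_decode a)"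

lemma pair_eq_iff: "a = pair x y \<longleftrightarrow> pfst a = x \<and> psnd a = y"
  by (metis fst_conv snd_conv prod.collapse prod_decode_inverse prod_encode_inverse)

lemma pair_pfst_psnd: "pair (pfst a) (psnd a) = a"
  by simp

lemma pfst_le: "pfst a \<le> a" and psnd_le: "psnd a \<le> a"
  using le_prod_encode_1[of "pfst a" "psnd a"] le_prod_encode_2[of "psnd a" "pfst a"] by simp_all

lemma ex_bounded_pair_iff: "(\<exists>i<e + 1. \<exists>j<e + 1. e = pair i j \<and> P i j) \<longleftrightarrow> P (pfst e) (psnd e)"
  using pfst_le[of e] psnd_le[of e] by (auto simp: pair_eq_iff)

definition le_ae :: "aexp \<Rightarrow> aexp \<Rightarrow> aexp" where "le_ae a b = Sub (C 1) (Sub a b)"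
definition eq_ae :: "aexp \<Rightarrow> aexp \<Rightarrow> aexp" where "eq_ae a b = Mul (le_ae a b) (le_ae b a)"
definition lt_ae :: "aexp \<Rightarrow> aexp \<Rightarrow> aexp" where "lt_ae a b = le_ae (Add a (C 1)) b"
definition or_ae :: "aexp \<Rightarrow> aexp \<Rightarrow> aexp" where "or_ae p q = le_ae (C 1) (Add p q)"
definition not_ae :: "aexp \<Rightarrow> aexp" where "not_ae p = Sub (C 1) p"
definition ex_ae :: "nat \<Rightarrow> aexp \<Rightarrow> aexp \<Rightarrow> aexp" where "ex_ae v b p = le_ae (C 1) (Sum v b p)"

text \<open>The variables 100, 101 and 102 are bound inside \<open>bit_ae\<close> and \<open>pair_ae\<close>, so the
  arguments of these two combinators must not mention them.\<close>

definition pair_ae :: "aexp \<Rightarrow> aexp \<Rightarrow> aexp" where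
  "pair_ae x y = Add (Sum 102 (Add (Add x y) (C 1)) (V 102)) x"

definition bit_ae :: "aexp \<Rightarrow> aexp \<Rightarrow> aexp" where
  "bit_ae a k = ex_ae 100 (Add a (C 1)) (ex_ae 101 (Pow2 k)
     (eq_ae a (Add (Mul (Add (Mul (C 2) (V 100)) (C 1)) (Pow2 k)) (V 101))))"

lemma avars_combinators [simp]:
  "avars (le_ae a b) = avars a \<union> avars b" "avars (eq_ae a b) = avars a \<union> avars b"
  "avars (lt_ae a b) = avars a \<union> avars b" "avars (or_ae a b) = avars a \<union> avars b"
  "avars (not_ae a) = avars a" "avars (ex_ae v b p) = avars b \<union> (avars p - {v})"
  "avars (pair_ae a b) = avars a \<union> avars b"
  "avars (bit_ae a b) \<subseteq> avars a \<union> avars b"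
  by (auto simp: le_ae_def eq_ae_def lt_ae_def or_ae_def not_ae_def ex_ae_def pair_ae_def bit_ae_def)

lemma aval_le_ae [simp]: "aval (le_ae a b) r = of_bool (aval a r \<le> aval b r)"
  by (simp add: le_ae_def)

lemma aval_eq_ae [simp]: "aval (eq_ae a b) r = of_bool (aval a r = aval b r)"
  by (auto simp: eq_ae_def)

lemma aval_lt_ae [simp]: "aval (lt_ae a b) r = of_bool (aval a r < aval b r)"
  by (auto simp: lt_ae_def)

lemma aval_or_ae [simp]: "aval (or_ae p q) r = of_bool (aval p r \<noteq> 0 \<or> aval q r \<noteq> 0)"
  by (auto simp: or_ae_def)

lemma aval_not_ae [simp]: "aval (not_ae p) r = of_bool (aval p r = 0)"
  by (auto simp: not_ae_def)

lemma aval_ex_ae [simp]: "aval (ex_ae v b p) r = of_bool (\<exists>i<aval b r. aval p (r(v := i)) \<noteq> 0)"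
  by (auto simp: ex_ae_def Suc_le_eq)

lemma sum_lessThan_add_eq_triangle: "(\<Sum>i<k. i) + k = triangle k"
  by (induction k) auto

lemma aval_pair_ae [simp]:
  "102 \<notin> avars x \<Longrightarrow> 102 \<notin> avars y \<Longrightarrow> aval (pair_ae x y) r = prod_encode (aval x r, aval y r)"
  by (simp add: pair_ae_def prod_encode_def sum_lessThan_add_eq_triangle)

lemma set_decode_less: "k \<in> set_decode a \<Longrightarrow> k < a"
proof -
  assume "k \<in> set_decode a"
  then have "odd (a div 2 ^ k)" by (simp add: set_decode_def)
  then have "2 ^ k \<le> a" by (metis div_less even_zero not_le)
  then show ?thesis using less_exp[of k] by linarith
qed

lemma set_decode_iff_bounded:
  "k \<in> set_decode a \<longleftrightarrow> (\<exists>q<a + 1. \<exists>s<2 ^ k. a = (2 * q + 1) * 2 ^ k + s)"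
proof
  assume "k \<in> set_decode a"
  then have "odd (a div 2 ^ k)" by (simp add: set_decode_def)
  then have "a div 2 ^ k = 2 * (a div 2 ^ k div 2) + 1" by (metis odd_two_times_div_two_succ)
  then have "a = (2 * (a div 2 ^ k div 2) + 1) * 2 ^ k + a mod 2 ^ k" by (metis div_mult_mod_eq)
  moreover have "a div 2 ^ k div 2 < a + 1"
    using div_le_dividend[of "a div 2 ^ k" 2] div_le_dividend[of a "2 ^ k"] by linarith
  ultimately show "\<exists>q<a + 1. \<exists>s<2 ^ k. a = (2 * q + 1) * 2 ^ k + s" by force
next
  assume "\<exists>q<a + 1. \<exists>s<2 ^ k. a = (2 * q + 1) * 2 ^ k + s"
  then obtain q s where "s < 2 ^ k" "a = s + (2 * q + 1) * 2 ^ k" by auto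
  then have "a div 2 ^ k = 2 * q + 1 + s div 2 ^ k" by (simp del: mult_Suc)
  with \<open>s < 2 ^ k\<close> have "a div 2 ^ k = 2 * q + 1" by simp
  then show "k \<in> set_decode a" by (simp add: set_decode_def)
qed

lemma aval_bit_ae [simp]:
  assumes "100 \<notin> avars a" "101 \<notin> avars a" "100 \<notin> avars k" "101 \<notin> avars k"
  shows "aval (bit_ae a k) r = of_bool (aval k r \<in> set_decode (aval a r))"
  using assms by (simp add: bit_ae_def set_decode_iff_bounded)

definition let_pair_ae :: "nat \<Rightarrow> nat \<Rightarrow> aexp \<Rightarrow> aexp \<Rightarrow> aexp" where
  "let_pair_ae v w E B =
     ex_ae v (Add E (C 1)) (ex_ae w (Add E (C 1)) (Mul (eq_ae E (pair_ae (V v) (V w))) B))"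

lemma avars_let_pair_ae [simp]:
  "avars (let_pair_ae v w E B) = avars E \<union> (avars B - {v, w})"
  by (auto simp: let_pair_ae_def)

lemma aval_let_pair_ae [simp]:
  assumes "v \<notin> avars E" "w \<notin> avars E" "v \<noteq> w" "v \<noteq> 102" "w \<noteq> 102"
  shows "aval (let_pair_ae v w E B) r
    = of_bool (aval B (r(v := pfst (aval E r), w := psnd (aval E r))) \<noteq> 0)"
proof -
  let ?e = "aval E r"
  have "aval (let_pair_ae v w E B) r
    = of_bool (\<exists>i<?e + 1. \<exists>j<?e + 1. ?e = pair i j \<and> aval B (r(v := i, w := j)) \<noteq> 0)"
    using assms by (simp add: let_pair_ae_def)
  then show ?thesis by (simp only: ex_bounded_pair_iff)
qed

definition bs_of :: "nat \<Rightarrow> bsent set" where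
  "bs_of a = {s. bs_code s \<in> set_decode a}"

lemma mem_bs_of [simp]: "s \<in> bs_of a \<longleftrightarrow> bs_code s \<in> set_decode a"
  by (simp add: bs_of_def)

lemma inj_bs_code: "inj bs_code"
proof (rule injI)
  fix s s' :: bsent
  assume "bs_code s = bs_code s'"
  then show "s = s'" by (cases s; cases s') (auto, presburger+)
qed

lemma surj_bs_code: "surj bs_code"
  unfolding surj_def
proof
  fix k :: nat
  obtain a b where ab: "k div 4 = pair a b" using pair_pfst_psnd by metis
  have k: "k = 4 * pair a b + k mod 4" unfolding ab[symmetric] by simp
  have "k mod 4 = 0 \<or> k mod 4 = 1 \<or> k mod 4 = 2 \<or> k mod 4 = 3" by auto
  then show "\<exists>s. k = bs_code s"
    using k by (elim disjE) (metis bs_code.simps add_0_right)+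
qed

lemma finite_bs_of: "finite (bs_of a)"
  using finite_vimageI[OF finite_set_decode inj_bs_code] by (simp add: bs_of_def vimage_def)

lemma bs_of_set_encode: "finite \<alpha> \<Longrightarrow> bs_of (set_encode (bs_code ` \<alpha>)) = \<alpha>"
  using inj_bs_code by (auto simp: bs_of_def dest: injD)

lemma set_encode_bs_of: "set_encode (bs_code ` bs_of a) = a"
proof -
  have "bs_code ` bs_of a = set_decode a"
    using surj_bs_code by (auto simp: bs_of_def)
  then show ?thesis by simp
qed

section \<open>The enumeration operator\<close>

definition gamma_elem :: "bsent set \<Rightarrow> nat \<Rightarrow> bool" where
  "gamma_elem X e \<longleftrightarrow> (\<exists>x y z. e = pair x y \<and> y < z \<and>
      ((Lt x y \<in> X \<and> Lt z x \<in> X) \<or> (Lt y x \<in> X \<and> Lt x z \<in> X)))"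

fun gamma_sent :: "bsent set \<Rightarrow> bsent \<Rightarrow> bool" where
  "gamma_sent X (Eq e e') \<longleftrightarrow> e = e' \<and> gamma_elem X e"
| "gamma_sent X (NEq e e') \<longleftrightarrow> e \<noteq> e' \<and> gamma_elem X e \<and> gamma_elem X e'"
| "gamma_sent X (Lt e e') \<longleftrightarrow> gamma_elem X e \<and> gamma_elem X e' \<and>
     (Lt (pfst e) (pfst e') \<in> X \<or> (pfst e = pfst e' \<and> Lt (psnd e) (psnd e') \<in> X))"
| "gamma_sent X (NLt e e') \<longleftrightarrow> gamma_elem X e \<and> gamma_elem X e' \<and>
     NLt (pfst e) (pfst e') \<in> X \<and> (pfst e \<noteq> pfst e' \<or> NLt (psnd e) (psnd e') \<in> X)"

definition Gamma :: "(bsent set \<times> bsent) set" where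
  "Gamma = {(\<alpha>, \<phi>). finite \<alpha> \<and> gamma_sent \<alpha> \<phi>}"

lemma Lt_code_less: "bs_code (Lt x y) \<in> set_decode a \<Longrightarrow> x < a \<and> y < a"
  using set_decode_less[of "bs_code (Lt x y)" a] le_prod_encode_1[of x y] le_prod_encode_2[of y x]
  by simp

lemma gamma_elem_bs_of_iff:
  "gamma_elem (bs_of a) e \<longleftrightarrow> (\<exists>z<a. psnd e < z \<and>
     ((Lt (pfst e) (psnd e) \<in> bs_of a \<and> Lt z (pfst e) \<in> bs_of a) \<or>
      (Lt (psnd e) (pfst e) \<in> bs_of a \<and> Lt (pfst e) z \<in> bs_of a)))"
  unfolding gamma_elem_def pair_eq_iff mem_bs_of by (blast dest: Lt_code_less)

text \<open>In the expressions below variable 1 holds the code of \<open>\<alpha>\<close>, variable 2 that of \<open>\<phi>\<close>, and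
  variables 3 and 4 the two points \<open>\<phi>\<close> speaks about; all higher variables are bound.\<close>

definition code_ae :: "nat \<Rightarrow> aexp \<Rightarrow> aexp \<Rightarrow> aexp" where
  "code_ae d u v = Add (Mul (C 4) (pair_ae u v)) (C d)"

definition member_ae :: "nat \<Rightarrow> nat \<Rightarrow> nat \<Rightarrow> aexp" where
  "member_ae d u v = bit_ae (V 1) (code_ae d (V u) (V v))"

lemma avars_member_ae: "avars (member_ae d u v) \<subseteq> {1, u, v}"
  using avars_combinators(8)[of "V 1" "code_ae d (V u) (V v)"]
  by (auto simp: member_ae_def code_ae_def)

lemma aval_member_ae [simp]:
  "u < 100 \<Longrightarrow> v < 100 \<Longrightarrow>
   aval (member_ae d u v) r = of_bool (4 * pair (r u) (r v) + d \<in> set_decode (r 1))"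
  by (simp add: member_ae_def code_ae_def)

definition elem_ae :: "nat \<Rightarrow> aexp" where
  "elem_ae e = let_pair_ae 5 6 (V e) (ex_ae 7 (V 1) (Mul (lt_ae (V 6) (V 7))
     (or_ae (Mul (member_ae 1 5 6) (member_ae 1 7 5)) (Mul (member_ae 1 6 5) (member_ae 1 5 7)))))"

lemma aval_elem_ae [simp]:
  "e < 5 \<Longrightarrow> aval (elem_ae e) r = of_bool (gamma_elem (bs_of (r 1)) (r e))"
  by (simp add: elem_ae_def gamma_elem_bs_of_iff)

definition lt_pairs_ae :: aexp where
  "lt_pairs_ae = let_pair_ae 8 9 (V 3) (let_pair_ae 10 11 (V 4)
     (or_ae (member_ae 1 8 10) (Mul (eq_ae (V 8) (V 10)) (member_ae 1 9 11))))"

definition nlt_pairs_ae :: aexp where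
  "nlt_pairs_ae = let_pair_ae 8 9 (V 3) (let_pair_ae 10 11 (V 4)
     (Mul (member_ae 3 8 10) (or_ae (not_ae (eq_ae (V 8) (V 10))) (member_ae 3 9 11))))"

lemma aval_lt_pairs_ae [simp]: "aval lt_pairs_ae r = of_bool
    (Lt (pfst (r 3)) (pfst (r 4)) \<in> bs_of (r 1) \<or>
     (pfst (r 3) = pfst (r 4) \<and> Lt (psnd (r 3)) (psnd (r 4)) \<in> bs_of (r 1)))"
  by (simp add: lt_pairs_ae_def)

lemma aval_nlt_pairs_ae [simp]: "aval nlt_pairs_ae r = of_bool
    (NLt (pfst (r 3)) (pfst (r 4)) \<in> bs_of (r 1) \<and>
     (pfst (r 3) \<noteq> pfst (r 4) \<or> NLt (psnd (r 3)) (psnd (r 4)) \<in> bs_of (r 1)))"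
  by (simp add: nlt_pairs_ae_def)

definition sent_ae :: aexp where
  "sent_ae = ex_ae 3 (Add (V 2) (C 1)) (ex_ae 4 (Add (V 2) (C 1)) (or_ae (or_ae
     (Mul (eq_ae (V 2) (code_ae 0 (V 3) (V 4))) (Mul (eq_ae (V 3) (V 4)) (elem_ae 3)))
     (Mul (eq_ae (V 2) (code_ae 2 (V 3) (V 4)))
        (Mul (not_ae (eq_ae (V 3) (V 4))) (Mul (elem_ae 3) (elem_ae 4)))))
   (or_ae
     (Mul (eq_ae (V 2) (code_ae 1 (V 3) (V 4))) (Mul (Mul (elem_ae 3) (elem_ae 4)) lt_pairs_ae))
     (Mul (eq_ae (V 2) (code_ae 3 (V 3) (V 4))) (Mul (Mul (elem_ae 3) (elem_ae 4)) nlt_pairs_ae)))))"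

lemma aval_sent_ae:
  "aval sent_ae r \<noteq> 0 \<longleftrightarrow> (\<exists>\<phi>. r 2 = bs_code \<phi> \<and> gamma_sent (bs_of (r 1)) \<phi>)"
proof -
  have "aval sent_ae r \<noteq> 0 \<longleftrightarrow> (\<exists>e<r 2 + 1. \<exists>e'<r 2 + 1. \<exists>\<phi>\<in>{Eq e e', NEq e e', Lt e e', NLt e e'}.
          r 2 = bs_code \<phi> \<and> gamma_sent (bs_of (r 1)) \<phi>)"
    by (simp add: sent_ae_def code_ae_def) blast
  also have "\<dots> \<longleftrightarrow> (\<exists>\<phi>. r 2 = bs_code \<phi> \<and> gamma_sent (bs_of (r 1)) \<phi>)"
  proof
    assume "\<exists>\<phi>. r 2 = bs_code \<phi> \<and> gamma_sent (bs_of (r 1)) \<phi>"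
    then obtain \<phi> where \<phi>: "r 2 = bs_code \<phi>" "gamma_sent (bs_of (r 1)) \<phi>" by blast
    obtain e e' where "\<phi> \<in> {Eq e e', NEq e e', Lt e e', NLt e e'}" by (cases \<phi>) auto
    moreover from this have "e < r 2 + 1" "e' < r 2 + 1"
      using \<phi>(1) le_prod_encode_1[of e e'] le_prod_encode_2[of e' e] by auto
    ultimately show "\<exists>e<r 2 + 1. \<exists>e'<r 2 + 1. \<exists>\<phi>\<in>{Eq e e', NEq e e', Lt e e', NLt e e'}.
          r 2 = bs_code \<phi> \<and> gamma_sent (bs_of (r 1)) \<phi>"
      using \<phi> by blast
  qed blast
  finally show ?thesis .
qed

definition Gamma_codes_ae :: aexp where
  "Gamma_codes_ae = not_ae (let_pair_ae 1 2 (V 0) sent_ae)"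

lemma avars_Gamma_codes_ae: "avars Gamma_codes_ae \<subseteq> {0}"
proof -
  have "avars (elem_ae e) \<subseteq> {1, e}" for e
    using avars_member_ae by (fastforce simp: elem_ae_def)
  moreover have "avars lt_pairs_ae \<subseteq> {1, 3, 4}" "avars nlt_pairs_ae \<subseteq> {1, 3, 4}"
    using avars_member_ae by (fastforce simp: lt_pairs_ae_def nlt_pairs_ae_def)+
  ultimately have "avars sent_ae \<subseteq> {1, 2}"
    by (auto simp: sent_ae_def code_ae_def)
  then show ?thesis by (auto simp: Gamma_codes_ae_def)
qed

lemma enum_op_Gamma: "enum_op Gamma"
proof -
  let ?S = "{prod_encode (set_encode (bs_code ` \<alpha>), bs_code \<phi>) | \<alpha> \<phi>. (\<alpha>, \<phi>) \<in> Gamma}"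
  have codes: "x \<in> ?S \<longleftrightarrow> (\<exists>\<phi>. psnd x = bs_code \<phi> \<and> gamma_sent (bs_of (pfst x)) \<phi>)" for x
  proof
    assume "x \<in> ?S"
    then show "\<exists>\<phi>. psnd x = bs_code \<phi> \<and> gamma_sent (bs_of (pfst x)) \<phi>"
      by (auto simp: Gamma_def bs_of_set_encode)
  next
    assume "\<exists>\<phi>. psnd x = bs_code \<phi> \<and> gamma_sent (bs_of (pfst x)) \<phi>"
    then obtain \<phi> where "psnd x = bs_code \<phi>" "gamma_sent (bs_of (pfst x)) \<phi>" by blast
    moreover have "x = prod_encode (set_encode (bs_code ` bs_of (pfst x)), psnd x)"
      by (simp add: set_encode_bs_of)
    ultimately show "x \<in> ?S" using finite_bs_of by (auto simp: Gamma_def)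
  qed
  have "ce ?S"
  proof (rule ce_if_zero_set_of_aexp[OF avars_Gamma_codes_ae])
    show "x \<in> ?S \<longleftrightarrow> aval Gamma_codes_ae (\<lambda>_. x) = 0" for x
      unfolding codes using aval_sent_ae[of "(\<lambda>_. x)(1 := pfst x, 2 := psnd x)"]
      by (simp add: Gamma_codes_ae_def)
  qed
  then show ?thesis by (simp add: enum_op_def Gamma_def)
qed

section \<open>Linear orders\<close>

definition linear_lo :: "lstr \<Rightarrow> bool" where
  "linear_lo A \<longleftrightarrow> (\<forall>x\<in>fst A. \<not> snd A x x) \<and>
     (\<forall>x\<in>fst A. \<forall>y\<in>fst A. \<forall>z\<in>fst A. snd A x y \<longrightarrow> snd A y z \<longrightarrow> snd A x z) \<and>
     (\<forall>x\<in>fst A. \<forall>y\<in>fst A. x \<noteq> y \<longrightarrow> snd A x y \<or> snd A y x)"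

lemma linear_loD:
  assumes "linear_lo A"
  shows linear_lo_irrefl: "x \<in> fst A \<Longrightarrow> \<not> snd A x x"
    and linear_lo_trans: "x \<in> fst A \<Longrightarrow> y \<in> fst A \<Longrightarrow> z \<in> fst A \<Longrightarrow> snd A x y \<Longrightarrow> snd A y z \<Longrightarrow> snd A x z"
    and linear_lo_total: "x \<in> fst A \<Longrightarrow> y \<in> fst A \<Longrightarrow> x \<noteq> y \<Longrightarrow> snd A x y \<or> snd A y x"
    and linear_lo_asym: "x \<in> fst A \<Longrightarrow> y \<in> fst A \<Longrightarrow> snd A x y \<Longrightarrow> \<not> snd A y x"
  using assms unfolding linear_lo_def by blast+

lemma linear_lo_restrict: "linear_lo A \<Longrightarrow> F \<subseteq> fst A \<Longrightarrow> linear_lo (F, snd A)"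
  unfolding linear_lo_def by (simp add: subset_iff) blast

lemma linear_lo_lex:
  assumes "linear_lo (S\<^sub>1, R\<^sub>1)" "linear_lo (S\<^sub>2, R\<^sub>2)" "\<And>a. a \<in> D \<Longrightarrow> pfst a \<in> S\<^sub>1 \<and> psnd a \<in> S\<^sub>2"
  shows "linear_lo (D, \<lambda>a b. R\<^sub>1 (pfst a) (pfst b) \<or> (pfst a = pfst b \<and> R\<^sub>2 (psnd a) (psnd b)))"
  unfolding linear_lo_def fst_conv snd_conv
proof (intro conjI ballI impI)
  note l1 = linear_loD[OF assms(1), simplified] and l2 = linear_loD[OF assms(2), simplified]
  fix x y z assume "x \<in> D" "y \<in> D" "z \<in> D"
    "R\<^sub>1 (pfst x) (pfst y) \<or> pfst x = pfst y \<and> R\<^sub>2 (psnd x) (psnd y)"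
    "R\<^sub>1 (pfst y) (pfst z) \<or> pfst y = pfst z \<and> R\<^sub>2 (psnd y) (psnd z)"
  then show "R\<^sub>1 (pfst x) (pfst z) \<or> pfst x = pfst z \<and> R\<^sub>2 (psnd x) (psnd z)"
    using l1(2)[of "pfst x" "pfst y" "pfst z"] l2(2)[of "psnd x" "psnd y" "psnd z"] assms(3) by metis
next
  note l1 = linear_loD[OF assms(1), simplified] and l2 = linear_loD[OF assms(2), simplified]
  fix x y assume "x \<in> D" "y \<in> D" "x \<noteq> y"
  moreover from \<open>x \<noteq> y\<close> have "pfst x \<noteq> pfst y \<or> psnd x \<noteq> psnd y"
    by (metis pair_pfst_psnd)
  ultimately show "(R\<^sub>1 (pfst x) (pfst y) \<or> pfst x = pfst y \<and> R\<^sub>2 (psnd x) (psnd y)) \<or>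
      (R\<^sub>1 (pfst y) (pfst x) \<or> pfst y = pfst x \<and> R\<^sub>2 (psnd y) (psnd x))"
    using l1(3)[of "pfst x" "pfst y"] l2(3)[of "psnd x" "psnd y"] assms(3) by metis
qed (use assms(3) linear_loD(1)[OF assms(1)] linear_loD(1)[OF assms(2)] in auto)

lemma times_lo_eq:
  "times_lo L m = ({pair i x | i x. i < m \<and> x \<in> fst L},
     \<lambda>a b. pfst a < pfst b \<or> (pfst a = pfst b \<and> snd L (psnd a) (psnd b)))"
  unfolding times_lo_def case_prod_beta ..

lemma mem_times_lo: "a \<in> fst (times_lo L m) \<longleftrightarrow> pfst a < m \<and> psnd a \<in> fst L"
  unfolding times_lo_eq by (auto simp: pair_eq_iff)

lemma pair_mem_times_lo [simp]: "pair i x \<in> fst (times_lo L m) \<longleftrightarrow> i < m \<and> x \<in> fst L"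
  by (simp add: mem_times_lo)

lemma less_times_lo:
  "snd (times_lo L m) a b \<longleftrightarrow> pfst a < pfst b \<or> (pfst a = pfst b \<and> snd L (psnd a) (psnd b))"
  by (simp add: times_lo_eq)

lemma linear_lo_times_lo: "linear_lo L \<Longrightarrow> linear_lo (times_lo L m)"
  unfolding times_lo_eq
  by (rule linear_lo_lex[of UNIV "(<)"]) (auto simp: linear_lo_def pair_eq_iff)

lemma linear_lo_omega: "linear_lo omega_lo"
  by (auto simp: linear_lo_def omega_lo_def)

lemma omega2_lo_eq: "omega2_lo = (UNIV, \<lambda>a b. pfst a < pfst b \<or> (pfst a = pfst b \<and> psnd a < psnd b))"
  unfolding omega2_lo_def case_prod_beta ..

lemma linear_lo_omega2: "linear_lo omega2_lo"
  unfolding omega2_lo_eq by (rule linear_lo_lex[of UNIV "(<)" UNIV "(<)"]) (auto simp: linear_lo_def)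

lemma iso_refl: "iso A A"
  unfolding iso_def by (rule exI[of _ id]) auto

lemma iso_sym: "iso A B \<Longrightarrow> iso B A"
proof -
  assume "iso A B"
  then obtain h where h: "bij_betw h (fst A) (fst B)"
    "\<forall>x\<in>fst A. \<forall>y\<in>fst A. snd A x y \<longleftrightarrow> snd B (h x) (h y)"
    unfolding iso_def by blast
  let ?g = "the_inv_into (fst A) h"
  have "\<forall>x\<in>fst B. \<forall>y\<in>fst B. snd B x y \<longleftrightarrow> snd A (?g x) (?g y)"
    using h bij_betw_the_inv_into[OF h(1)] f_the_inv_into_f_bij_betw[OF h(1)]
    by (metis bij_betw_apply)
  then show "iso B A" using bij_betw_the_inv_into[OF h(1)] unfolding iso_def by blast
qed

lemma iso_trans: "iso A B \<Longrightarrow> iso B D \<Longrightarrow> iso A D"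
proof -
  assume "iso A B" "iso B D"
  then obtain h g where h: "bij_betw h (fst A) (fst B)"
    "\<forall>x\<in>fst A. \<forall>y\<in>fst A. snd A x y \<longleftrightarrow> snd B (h x) (h y)"
    and g: "bij_betw g (fst B) (fst D)" "\<forall>x\<in>fst B. \<forall>y\<in>fst B. snd B x y \<longleftrightarrow> snd D (g x) (g y)"
    unfolding iso_def by blast
  have "\<forall>x\<in>fst A. \<forall>y\<in>fst A. snd A x y \<longleftrightarrow> snd D ((g \<circ> h) x) ((g \<circ> h) y)"
    using h g by (simp add: bij_betw_apply)
  then show "iso A D" using bij_betw_trans[OF h(1) g(1)] unfolding iso_def by blast
qed

lemma iso_cong: "iso A A' \<Longrightarrow> iso B B' \<Longrightarrow> iso A B \<longleftrightarrow> iso A' B'"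
  by (meson iso_sym iso_trans)

lemma iso_rev_lo: "iso A B \<Longrightarrow> iso (rev_lo A) (rev_lo B)"
  unfolding iso_def rev_lo_def by auto

lemma rev_lo_rev_lo [simp]: "rev_lo (rev_lo L) = L"
  by (simp add: rev_lo_def)

lemma iso_rev_lo_times_lo: "iso (rev_lo (times_lo L m)) (times_lo (rev_lo L) m)"
proof -
  define g where "g a = pair (m - 1 - pfst a) (psnd a)" for a
  have "bij_betw g (fst (times_lo L m)) (fst (times_lo (rev_lo L) m))"
    by (rule bij_betw_byWitness[where f'=g]) (auto simp: mem_times_lo g_def rev_lo_def)
  moreover have "\<forall>x\<in>fst (times_lo L m). \<forall>y\<in>fst (times_lo L m).
      snd (times_lo L m) y x \<longleftrightarrow> snd (times_lo (rev_lo L) m) (g x) (g y)"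
    by (auto simp: mem_times_lo less_times_lo g_def rev_lo_def)
  ultimately show ?thesis unfolding iso_def by (auto simp: rev_lo_def)
qed

definition omega_like :: "nat set \<Rightarrow> (nat \<Rightarrow> nat \<Rightarrow> bool) \<Rightarrow> bool" where
  "omega_like F R \<longleftrightarrow> infinite F \<and> (\<forall>x\<in>F. finite {y\<in>F. R y x})"

definition rank_in :: "nat set \<Rightarrow> (nat \<Rightarrow> nat \<Rightarrow> bool) \<Rightarrow> nat \<Rightarrow> nat" where
  "rank_in F R x = card {y\<in>F. R y x}"

lemma omega_like_rank_in:
  assumes lin: "linear_lo (F, R)" and W: "omega_like F R"
  shows "bij_betw (rank_in F R) F UNIV"
    and "\<And>x y. x \<in> F \<Longrightarrow> y \<in> F \<Longrightarrow> R x y \<longleftrightarrow> rank_in F R x < rank_in F R y"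
proof -
  note l = linear_loD[OF lin, simplified]
  have fin: "x \<in> F \<Longrightarrow> finite {y\<in>F. R y x}" for x using W by (auto simp: omega_like_def)
  have mono: "rank_in F R x < rank_in F R y" if "x \<in> F" "y \<in> F" "R x y" for x y
  proof -
    have "{z\<in>F. R z x} \<subset> {z\<in>F. R z y}"
      using that l(1)[of x] l(2)[of _ x y] by blast
    then show ?thesis unfolding rank_in_def by (rule psubset_card_mono[OF fin[OF \<open>y \<in> F\<close>]])
  qed
  show ord: "R x y \<longleftrightarrow> rank_in F R x < rank_in F R y" if "x \<in> F" "y \<in> F" for x y
    using mono[OF that] mono[OF that(2,1)] l(3)[OF that] by (metis less_asym less_irrefl)
  have inj: "inj_on (rank_in F R) F"
    by (rule inj_onI) (metis l(3) less_irrefl mono)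
  have "k \<in> rank_in F R ` F" for k
  proof -
    have "infinite (rank_in F R ` F)" using inj W by (auto simp: omega_like_def dest: finite_imageD)
    then obtain y where y: "y \<in> F" "k < rank_in F R y"
      by (metis finite_nat_set_iff_bounded image_iff not_less_eq)
    let ?P = "{z\<in>F. R z y}"
    have "rank_in F R ` ?P \<subseteq> {..<rank_in F R y}" using mono y(1) by auto
    moreover have "card (rank_in F R ` ?P) = rank_in F R y"
      using inj by (subst card_image) (auto intro: inj_on_subset simp: rank_in_def)
    ultimately have "rank_in F R ` ?P = {..<rank_in F R y}"
      by (intro card_subset_eq) auto
    then show ?thesis using y(2) by blast
  qed
  then show "bij_betw (rank_in F R) F UNIV" unfolding bij_betw_def using inj by blast
qed

text \<open>\<open>omega_times Q\<close> is the ordinal product \<open>\<omega> \<cdot> Q\<close>: every point of \<open>Q\<close> is replaced by a copy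
  of \<open>\<omega>\<close>.\<close>

definition omega_times :: "lstr \<Rightarrow> lstr" where
  "omega_times Q = ({pair q k | q k. q \<in> fst Q},
     \<lambda>a b. snd Q (pfst a) (pfst b) \<or> (pfst a = pfst b \<and> psnd a < psnd b))"

lemma iso_omega_times_by_coordinates:
  fixes \<pi> r :: "nat \<Rightarrow> nat"
  assumes onto: "\<pi> ` fst P = fst Q"
    and bij: "\<And>e. e \<in> fst Q \<Longrightarrow> bij_betw r {p\<in>fst P. \<pi> p = e} UNIV"
    and ord: "\<And>p q. p \<in> fst P \<Longrightarrow> q \<in> fst P \<Longrightarrow>
      snd P p q \<longleftrightarrow> snd Q (\<pi> p) (\<pi> q) \<or> (\<pi> p = \<pi> q \<and> r p < r q)"
  shows "iso P (omega_times Q)"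
proof -
  define h where "h p = pair (\<pi> p) (r p)" for p
  have "inj_on h (fst P)"
  proof (rule inj_onI)
    fix p q assume pq: "p \<in> fst P" "q \<in> fst P" "h p = h q"
    then have "\<pi> p = \<pi> q" "r p = r q" by (auto simp: h_def)
    moreover have "\<pi> p \<in> fst Q" using onto pq(1) by blast
    ultimately show "p = q"
      using bij_betw_imp_inj_on[OF bij] pq(1,2) by (metis (mono_tags, lifting) inj_onD mem_Collect_eq)
  qed
  moreover have "h ` fst P = fst (omega_times Q)"
  proof
    show "h ` fst P \<subseteq> fst (omega_times Q)" using onto by (auto simp: h_def omega_times_def)
    show "fst (omega_times Q) \<subseteq> h ` fst P"
    proof
      fix a assume "a \<in> fst (omega_times Q)"
      then obtain e k where a: "a = pair e k" "e \<in> fst Q" by (auto simp: omega_times_def)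
      then obtain p where "p \<in> fst P" "\<pi> p = e" "r p = k"
        using bij[OF a(2)] by (metis (mono_tags, lifting) bij_betw_def UNIV_I imageE mem_Collect_eq)
      then show "a \<in> h ` fst P" using a by (auto simp: h_def)
    qed
  qed
  ultimately show ?thesis unfolding iso_def bij_betw_def
    by (intro exI[of _ h] conjI ballI) (simp_all add: ord omega_times_def h_def)
qed

lemma iso_omega_times_by_fibres:
  assumes LP: "linear_lo P" and LQ: "linear_lo Q" and onto: "\<pi> ` fst P = fst Q"
    and mono: "\<And>p q. p \<in> fst P \<Longrightarrow> q \<in> fst P \<Longrightarrow> snd Q (\<pi> p) (\<pi> q) \<Longrightarrow> snd P p q"
    and fibres: "\<And>e. e \<in> fst Q \<Longrightarrow> omega_like {p\<in>fst P. \<pi> p = e} (snd P)"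
  shows "iso P (omega_times Q)"
proof -
  define F where "F e = {p\<in>fst P. \<pi> p = e}" for e
  define r where "r p = rank_in (F (\<pi> p)) (snd P) p" for p
  have rank: "bij_betw (rank_in (F e) (snd P)) (F e) UNIV"
    "\<And>x y. x \<in> F e \<Longrightarrow> y \<in> F e \<Longrightarrow> snd P x y \<longleftrightarrow> rank_in (F e) (snd P) x < rank_in (F e) (snd P) y"
    if "e \<in> fst Q" for e
    using omega_like_rank_in[OF linear_lo_restrict[OF LP] fibres[OF that]] by (auto simp: F_def)
  note lp = linear_loD[OF LP] and lq = linear_loD[OF LQ]
  have \<pi>Q: "p \<in> fst P \<Longrightarrow> \<pi> p \<in> fst Q" for p using onto by blast
  have inF: "p \<in> fst P \<Longrightarrow> p \<in> F (\<pi> p)" for p by (simp add: F_def)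
  show ?thesis
  proof (rule iso_omega_times_by_coordinates[OF onto])
    show "bij_betw r {p\<in>fst P. \<pi> p = e} UNIV" if "e \<in> fst Q" for e
    proof -
      have "bij_betw r (F e) UNIV"
        by (rule bij_betw_cong[THEN iffD2, OF _ rank(1)[OF that]]) (simp add: F_def r_def)
      then show ?thesis by (simp add: F_def)
    qed
    show "snd P p q \<longleftrightarrow> snd Q (\<pi> p) (\<pi> q) \<or> (\<pi> p = \<pi> q \<and> r p < r q)"
      if "p \<in> fst P" "q \<in> fst P" for p q
    proof (cases "\<pi> p = \<pi> q")
      case True
      then have "q \<in> F (\<pi> p)" using inF[OF that(2)] by simp
      then show ?thesis
        using rank(2)[OF \<pi>Q[OF that(1)] inF[OF that(1)]] lq(1)[OF \<pi>Q[OF that(1)]] True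
        by (simp add: r_def)
    next
      case False
      then show ?thesis
        using lq(3)[OF \<pi>Q[OF that(1)] \<pi>Q[OF that(2)]] lq(4)[OF \<pi>Q[OF that(2)] \<pi>Q[OF that(1)]]
          mono[OF that] mono[OF that(2,1)] lp(4)[OF that(2,1)] by blast
    qed
  qed
qed

lemma omega_like_image:
  assumes "inj_on g F" "\<And>x y. x \<in> F \<Longrightarrow> y \<in> F \<Longrightarrow> R' (g x) (g y) \<longleftrightarrow> R x y"
    and "omega_like F R"
  shows "omega_like (g ` F) R'"
proof -
  have "{y \<in> g ` F. R' y (g x)} = g ` {y\<in>F. R y x}" if "x \<in> F" for x
    using assms(2) that by auto
  then show ?thesis
    using assms(3) finite_image_iff[OF assms(1)] by (auto simp: omega_like_def)
qed

lemma omega_like_nat: "omega_like UNIV ((<) :: nat \<Rightarrow> nat \<Rightarrow> bool)"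
  by (simp add: omega_like_def)

lemma iso_times_omega2_omega_times:
  "iso (times_lo omega2_lo n) (omega_times (times_lo omega_lo n))"
proof (rule iso_omega_times_by_fibres[where \<pi>="\<lambda>a. pair (pfst a) (pfst (psnd a))"])
  show "linear_lo (times_lo omega2_lo n)" "linear_lo (times_lo omega_lo n)"
    by (simp_all add: linear_lo_times_lo linear_lo_omega linear_lo_omega2)
  show "(\<lambda>a. pair (pfst a) (pfst (psnd a))) ` fst (times_lo omega2_lo n) = fst (times_lo omega_lo n)"
  proof
    show "fst (times_lo omega_lo n) \<subseteq> (\<lambda>a. pair (pfst a) (pfst (psnd a))) ` fst (times_lo omega2_lo n)"
    proof
      fix b assume "b \<in> fst (times_lo omega_lo n)"
      then have "pair (pfst b) (pair (psnd b) 0) \<in> fst (times_lo omega2_lo n)"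
        by (simp add: mem_times_lo omega2_lo_def)
      then show "b \<in> (\<lambda>a. pair (pfst a) (pfst (psnd a))) ` fst (times_lo omega2_lo n)"
        by (rule rev_image_eqI) simp
    qed
  qed (auto simp: mem_times_lo omega_lo_def)
  show "snd (times_lo omega2_lo n) p q"
    if "snd (times_lo omega_lo n) (pair (pfst p) (pfst (psnd p))) (pair (pfst q) (pfst (psnd q)))" for p q
    using that by (auto simp: less_times_lo omega_lo_def omega2_lo_eq)
  fix e assume "e \<in> fst (times_lo omega_lo n)"
  then have "{p \<in> fst (times_lo omega2_lo n). pair (pfst p) (pfst (psnd p)) = e}
      = (\<lambda>x. pair (pfst e) (pair (psnd e) x)) ` UNIV"
    by (auto simp: mem_times_lo omega_lo_def omega2_lo_def pair_eq_iff)
  moreover have "omega_like ((\<lambda>x. pair (pfst e) (pair (psnd e) x)) ` UNIV) (snd (times_lo omega2_lo n))"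
    by (rule omega_like_image[OF _ _ omega_like_nat])
      (auto simp: inj_on_def less_times_lo omega2_lo_eq)
  ultimately show "omega_like {p \<in> fst (times_lo omega2_lo n). pair (pfst p) (pfst (psnd p)) = e}
      (snd (times_lo omega2_lo n))" by simp
qed

definition has_least :: "lstr \<Rightarrow> bool" where
  "has_least L \<longleftrightarrow> (\<exists>x\<in>fst L. \<forall>y\<in>fst L. y \<noteq> x \<longrightarrow> snd L x y)"

lemma has_least_if_iso: "iso A B \<Longrightarrow> has_least B \<Longrightarrow> has_least A"
proof -
  assume "iso A B" "has_least B"
  then obtain h where h: "bij_betw h (fst A) (fst B)"
    "\<forall>x\<in>fst A. \<forall>y\<in>fst A. snd A x y \<longleftrightarrow> snd B (h x) (h y)"
    unfolding iso_def by blast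
  obtain m where m: "m \<in> fst B" "\<forall>y\<in>fst B. y \<noteq> m \<longrightarrow> snd B m y"
    using \<open>has_least B\<close> unfolding has_least_def by blast
  obtain x where x: "x \<in> fst A" "h x = m" using m(1) h(1) by (metis bij_betw_def imageE)
  have "snd A x y" if "y \<in> fst A" "y \<noteq> x" for y
    using h m x that by (metis bij_betw_apply bij_betw_imp_inj_on inj_onD)
  then show "has_least A" unfolding has_least_def using x(1) by blast
qed

lemma has_least_iso: "iso A B \<Longrightarrow> has_least A \<longleftrightarrow> has_least B"
  using has_least_if_iso iso_sym by blast

lemma has_least_times_lo: "has_least L \<Longrightarrow> 0 < m \<Longrightarrow> has_least (times_lo L m)"
proof -
  assume "has_least L" "0 < m"
  then obtain x where x: "x \<in> fst L" "\<forall>y\<in>fst L. y \<noteq> x \<longrightarrow> snd L x y"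
    by (auto simp: has_least_def)
  have "snd (times_lo L m) (pair 0 x) y" if "y \<in> fst (times_lo L m)" "y \<noteq> pair 0 x" for y
    using that x by (cases "pfst y = 0") (auto simp: mem_times_lo less_times_lo pair_eq_iff)
  then show ?thesis
    using x(1) \<open>0 < m\<close> unfolding has_least_def by (intro bexI[of _ "pair 0 x"]) auto
qed

lemma not_has_least_times_lo: "\<not> has_least L \<Longrightarrow> \<not> has_least (times_lo L m)"
proof
  assume "\<not> has_least L" "has_least (times_lo L m)"
  then obtain a where a: "a \<in> fst (times_lo L m)"
    "\<forall>y\<in>fst (times_lo L m). y \<noteq> a \<longrightarrow> snd (times_lo L m) a y"
    by (auto simp: has_least_def)
  have "snd L (psnd a) v" if "v \<in> fst L" "v \<noteq> psnd a" for v
  proof -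
    have "pair (pfst a) v \<noteq> a" using that(2) by (metis prod_encode_inverse snd_conv)
    then show ?thesis
      using a(2)[rule_format, of "pair (pfst a) v"] a(1) that by (simp add: mem_times_lo less_times_lo)
  qed
  then have "has_least L" using a(1) by (auto simp: has_least_def mem_times_lo)
  with \<open>\<not> has_least L\<close> show False ..
qed

lemma has_least_omega: "has_least omega_lo"
  by (auto simp: has_least_def omega_lo_def)

lemma has_least_omega2: "has_least omega2_lo"
  unfolding has_least_def omega2_lo_eq
  by (rule bexI[of _ "pair 0 0"]) (auto simp: pair_eq_iff[symmetric], metis pair_pfst_psnd gr0I)

lemma not_has_least_rev_omega: "\<not> has_least (rev_lo omega_lo)"
  unfolding has_least_def rev_lo_def omega_lo_def by (auto, metis lessI less_asym less_irrefl)

lemma not_has_least_rev_omega2: "\<not> has_least (rev_lo omega2_lo)"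
proof
  assume "has_least (rev_lo omega2_lo)"
  then obtain a where a: "\<forall>y. y \<noteq> a \<longrightarrow> pfst y < pfst a \<or> (pfst y = pfst a \<and> psnd y < psnd a)"
    unfolding has_least_def rev_lo_def omega2_lo_eq by auto
  have "pair (Suc (pfst a)) 0 \<noteq> a" by (metis Suc_n_not_n fst_conv prod_encode_inverse)
  from a[rule_format, OF this] show False by simp
qed

section \<open>The operator on atomic diagrams of linear orders\<close>

lemma Lt_in_diag: "Lt u v \<in> diag A \<longleftrightarrow> u \<in> fst A \<and> v \<in> fst A \<and> snd A u v"
  and NLt_in_diag: "NLt u v \<in> diag A \<longleftrightarrow> u \<in> fst A \<and> v \<in> fst A \<and> \<not> snd A u v"
  and Eq_in_diag: "Eq u v \<in> diag A \<longleftrightarrow> u \<in> fst A \<and> v \<in> fst A \<and> u = v"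
  and NEq_in_diag: "NEq u v \<in> diag A \<longleftrightarrow> u \<in> fst A \<and> v \<in> fst A \<and> u \<noteq> v"
  by (auto simp: diag_def Let_def)

lemma iso_if_diag_eq: "diag A = diag B \<Longrightarrow> iso A B"
proof -
  assume eq: "diag A = diag B"
  then have "fst A = fst B" using Eq_in_diag[of _ _ A] Eq_in_diag[of _ _ B] by blast
  moreover have "snd A x y \<longleftrightarrow> snd B x y" if "x \<in> fst A" "y \<in> fst A" for x y
    using eq Lt_in_diag[of x y A] Lt_in_diag[of x y B] that \<open>fst A = fst B\<close> by blast
  ultimately show "iso A B" unfolding iso_def by (intro exI[of _ id]) auto
qed

definition gamma_pair :: "lstr \<Rightarrow> nat \<Rightarrow> nat \<Rightarrow> bool" where
  "gamma_pair A x y \<longleftrightarrow> x \<in> fst A \<and> y \<in> fst A \<and> (\<exists>z\<in>fst A. y < z \<and>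
     ((snd A x y \<and> snd A z x) \<or> (snd A y x \<and> snd A x z)))"

definition gamma_lo :: "lstr \<Rightarrow> lstr" where
  "gamma_lo A = ({pair x y | x y. gamma_pair A x y},
     \<lambda>a b. snd A (pfst a) (pfst b) \<or> (pfst a = pfst b \<and> snd A (psnd a) (psnd b)))"

lemma mem_gamma_lo: "a \<in> fst (gamma_lo A) \<longleftrightarrow> gamma_pair A (pfst a) (psnd a)"
  by (auto simp: gamma_lo_def pair_eq_iff)

lemma less_gamma_lo:
  "snd (gamma_lo A) a b \<longleftrightarrow> snd A (pfst a) (pfst b) \<or> (pfst a = pfst b \<and> snd A (psnd a) (psnd b))"
  by (simp add: gamma_lo_def)

lemma gamma_pair_mem: "gamma_pair A x y \<Longrightarrow> x \<in> fst A \<and> y \<in> fst A"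
  by (simp add: gamma_pair_def)

lemma linear_lo_gamma_lo: "linear_lo A \<Longrightarrow> linear_lo (gamma_lo A)"
  unfolding gamma_lo_def
  by (rule linear_lo_lex[of "fst A" _ "fst A"]) (auto simp: pair_eq_iff gamma_pair_def)

lemma gamma_lo_rev_lo: "gamma_lo (rev_lo A) = rev_lo (gamma_lo A)"
proof -
  have "gamma_pair (rev_lo A) = gamma_pair A"
    unfolding gamma_pair_def rev_lo_def by (auto intro!: ext)
  then show ?thesis by (auto simp: gamma_lo_def rev_lo_def fun_eq_iff)
qed

lemma gamma_elem_diag: "gamma_elem (diag A) e \<longleftrightarrow> e \<in> fst (gamma_lo A)"
  unfolding gamma_elem_def mem_gamma_lo gamma_pair_def Lt_in_diag pair_eq_iff by blast

lemma gamma_sent_diag: "gamma_sent (diag A) \<phi> \<longleftrightarrow> \<phi> \<in> diag (gamma_lo A)"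
proof -
  have "a \<in> fst (gamma_lo A) \<Longrightarrow> pfst a \<in> fst A \<and> psnd a \<in> fst A" for a
    by (simp add: mem_gamma_lo gamma_pair_def)
  then show ?thesis
    by (cases \<phi>) (auto simp: Eq_in_diag NEq_in_diag Lt_in_diag NLt_in_diag gamma_elem_diag less_gamma_lo)
qed

lemma gamma_elem_mono: "X \<subseteq> Y \<Longrightarrow> gamma_elem X e \<Longrightarrow> gamma_elem Y e"
  unfolding gamma_elem_def by blast

lemma gamma_sent_mono: assumes "X \<subseteq> Y" "gamma_sent X \<phi>" shows "gamma_sent Y \<phi>"
  using assms gamma_elem_mono[OF assms(1)] by (cases \<phi>) auto

lemma gamma_elem_finite_support: "gamma_elem X e \<Longrightarrow> \<exists>\<alpha>\<subseteq>X. finite \<alpha> \<and> gamma_elem \<alpha> e"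
proof -
  assume "gamma_elem X e"
  then obtain x y z where "e = pair x y" "y < z" "(Lt x y \<in> X \<and> Lt z x \<in> X) \<or> (Lt y x \<in> X \<and> Lt x z \<in> X)"
    unfolding gamma_elem_def by blast
  then have "gamma_elem ({Lt x y, Lt z x, Lt y x, Lt x z} \<inter> X) e"
    unfolding gamma_elem_def by blast
  then show ?thesis by (intro exI[of _ "{Lt x y, Lt z x, Lt y x, Lt x z} \<inter> X"]) auto
qed

lemma gamma_sent_finite_support: "gamma_sent X \<phi> \<Longrightarrow> \<exists>\<alpha>\<subseteq>X. finite \<alpha> \<and> gamma_sent \<alpha> \<phi>"
proof -
  assume sent: "gamma_sent X \<phi>"
  obtain e e' where \<phi>: "\<phi> \<in> {Eq e e', NEq e e', Lt e e', NLt e e'}" by (cases \<phi>) auto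
  with sent have "gamma_elem X e" "gamma_elem X e'" by auto
  then obtain \<alpha> \<alpha>' where \<alpha>: "\<alpha> \<subseteq> X" "finite \<alpha>" "gamma_elem \<alpha> e"
    and \<alpha>': "\<alpha>' \<subseteq> X" "finite \<alpha>'" "gamma_elem \<alpha>' e'"
    using gamma_elem_finite_support by metis
  let ?\<beta> = "\<alpha> \<union> \<alpha>' \<union> (X \<inter> {Lt (pfst e) (pfst e'), Lt (psnd e) (psnd e'),
                           NLt (pfst e) (pfst e'), NLt (psnd e) (psnd e')})"
  have "gamma_elem ?\<beta> e" by (rule gamma_elem_mono[OF _ \<alpha>(3)]) blast
  moreover have "gamma_elem ?\<beta> e'" by (rule gamma_elem_mono[OF _ \<alpha>'(3)]) blast
  ultimately have "gamma_sent ?\<beta> \<phi>" using \<phi> sent by (elim insertE emptyE) auto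
  then show ?thesis using \<alpha> \<alpha>' by (intro exI[of _ ?\<beta>]) auto
qed

lemma apply_Gamma: "apply_op Gamma X = {\<phi>. gamma_sent X \<phi>}"
proof -
  have "(\<exists>\<alpha>. (\<alpha>, \<phi>) \<in> Gamma \<and> \<alpha> \<subseteq> X) \<longleftrightarrow> gamma_sent X \<phi>" for \<phi>
  proof
    assume "\<exists>\<alpha>. (\<alpha>, \<phi>) \<in> Gamma \<and> \<alpha> \<subseteq> X"
    then obtain \<alpha> where "gamma_sent \<alpha> \<phi>" "\<alpha> \<subseteq> X" by (auto simp: Gamma_def)
    then show "gamma_sent X \<phi>" using gamma_sent_mono by blast
  next
    assume "gamma_sent X \<phi>"
    then obtain \<alpha> where "\<alpha> \<subseteq> X" "finite \<alpha>" "gamma_sent \<alpha> \<phi>"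
      using gamma_sent_finite_support by blast
    then show "\<exists>\<alpha>. (\<alpha>, \<phi>) \<in> Gamma \<and> \<alpha> \<subseteq> X" by (auto simp: Gamma_def)
  qed
  then show ?thesis by (simp add: apply_op_def)
qed

lemma apply_Gamma_diag: "apply_op Gamma (diag A) = diag (gamma_lo A)"
  by (auto simp: apply_Gamma gamma_sent_diag)

section \<open>The image of \<open>\<omega> \<cdot> (n + 1)\<close>\<close>

lemma mixed_radix_less_iff:
  fixes b c c' p p' :: nat
  assumes "c < b" "c' < b"
  shows "p * b + c < p' * b + c' \<longleftrightarrow> p < p' \<or> (p = p' \<and> c < c')"
proof -
  have less: "p * b + d < p' * b + d'" if "p < p'" "d < b" for p p' d d' :: nat
  proof -
    have "p * b + d < Suc p * b" using that(2) by simp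
    also have "\<dots> \<le> p' * b" using that(1) by (metis Suc_leI mult_le_mono1)
    finally show ?thesis by simp
  qed
  show ?thesis
    using less[of p p' c c'] less[of p' p c' c] assms by (cases p p' rule: linorder_cases) auto
qed

lemma mixed_radix_eq_iff:
  fixes b c c' p p' :: nat
  assumes "c < b" "c' < b"
  shows "p * b + c = p' * b + c' \<longleftrightarrow> p = p' \<and> c = c'"
  using mixed_radix_less_iff[OF assms] mixed_radix_less_iff[OF assms(2,1)]
  by (metis less_irrefl linorder_neqE_nat)

text \<open>\<open>\<Gamma>\<close> depends on how the points of \<open>A\<close> are numbered, not only on the order type, so the
  computation is done for an arbitrary copy \<open>A\<close> of \<open>\<omega> \<cdot> (n + 1)\<close>, presented by an isomorphism
  \<open>h\<close>.\<close>

locale omega_multiple =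
  fixes n :: nat and A :: lstr and h :: "nat \<Rightarrow> nat"
  assumes bij_h: "bij_betw h (fst A) (fst (times_lo omega_lo (Suc n)))"
    and less_iff_h: "\<And>x y. x \<in> fst A \<Longrightarrow> y \<in> fst A \<Longrightarrow>
      snd A x y \<longleftrightarrow> snd (times_lo omega_lo (Suc n)) (h x) (h y)"
begin

abbreviation D where "D \<equiv> fst A"
abbreviation R where "R \<equiv> snd A"

definition block :: "nat \<Rightarrow> nat" where "block x = pfst (h x)"
definition pos :: "nat \<Rightarrow> nat" where "pos x = psnd (h x)"
definition elem :: "nat \<Rightarrow> nat \<Rightarrow> nat" where "elem c k = the_inv_into D h (pair c k)"

lemma block_le: "x \<in> D \<Longrightarrow> block x \<le> n"
  using bij_betw_apply[OF bij_h] by (fastforce simp: block_def mem_times_lo)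

lemma less_iff: "x \<in> D \<Longrightarrow> y \<in> D \<Longrightarrow> R x y \<longleftrightarrow> block x < block y \<or> (block x = block y \<and> pos x < pos y)"
  by (simp add: less_iff_h less_times_lo block_def pos_def omega_lo_def)

lemma eq_if_block_pos_eq: "x \<in> D \<Longrightarrow> y \<in> D \<Longrightarrow> block x = block y \<Longrightarrow> pos x = pos y \<Longrightarrow> x = y"
  using bij_betw_imp_inj_on[OF bij_h] by (metis block_def inj_onD pair_pfst_psnd pos_def)

lemma elem: assumes "c \<le> n" shows "elem c k \<in> D" "block (elem c k) = c" "pos (elem c k) = k"
proof -
  have c: "pair c k \<in> fst (times_lo omega_lo (Suc n))" using assms by (simp add: omega_lo_def)
  show "elem c k \<in> D" unfolding elem_def by (rule bij_betw_apply[OF bij_betw_the_inv_into[OF bij_h] c])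
  have "h (elem c k) = pair c k" unfolding elem_def by (rule f_the_inv_into_f_bij_betw[OF bij_h c])
  then show "block (elem c k) = c" "pos (elem c k) = k" by (simp_all add: block_def pos_def)
qed

lemma linear_A: "linear_lo A"
  unfolding linear_lo_def
proof (intro conjI ballI impI)
  fix x y z assume "x \<in> D" "y \<in> D" "z \<in> D" "R x y" "R y z"
  then show "R x z" using less_iff[of x y] less_iff[of y z] less_iff[of x z] by auto
next
  fix x y assume "x \<in> D" "y \<in> D" "x \<noteq> y"
  then show "R x y \<or> R y x"
    using less_iff[of x y] less_iff[of y x] eq_if_block_pos_eq[of x y] by linarith
qed (simp add: less_iff)

lemma block_infinite: "c \<le> n \<Longrightarrow> infinite {x\<in>D. block x = c}"
proof
  assume c: "c \<le> n" and fin: "finite {x\<in>D. block x = c}"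
  have "range (elem c) \<subseteq> {x\<in>D. block x = c}" using elem[OF c] by auto
  moreover have "inj (elem c)" using elem(3)[OF c] by (metis injI)
  ultimately have "infinite {x\<in>D. block x = c}" by (rule infinite_super[OF _ range_inj_infinite])
  with fin show False by blast
qed

lemma block_initial_finite: "finite {y\<in>D. block y = c \<and> pos y < m}"
proof (cases "c \<le> n")
  case True
  have "{y\<in>D. block y = c \<and> pos y < m} \<subseteq> elem c ` {..<m}"
    using elem[OF True] eq_if_block_pos_eq by (auto intro!: rev_image_eqI[of "pos _"])
  then show ?thesis by (rule finite_subset) simp
next
  case False
  then have empty: "{y\<in>D. block y = c \<and> pos y < m} = {}" using block_le by fastforce
  show ?thesis by (subst empty) simp
qed

lemma above_unbounded: "x \<in> D \<Longrightarrow> \<exists>z\<in>D. R x z \<and> y < z"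
proof -
  assume x: "x \<in> D"
  let ?S = "{z\<in>D. block z = block x} - {z\<in>D. block z = block x \<and> pos z < Suc (pos x)}"
  have "infinite ?S" using block_infinite[OF block_le[OF x]] block_initial_finite by simp
  then obtain z where "z \<in> ?S" "y < z" using infinite_nat_iff_unbounded by blast
  then show ?thesis using less_iff[OF x, of z] by auto
qed

lemma below_unbounded: "x \<in> D \<Longrightarrow> 0 < block x \<Longrightarrow> \<exists>z\<in>D. R z x \<and> y < z"
proof -
  assume x: "x \<in> D" "0 < block x"
  obtain z where "z \<in> {z\<in>D. block z = 0}" "y < z"
    using block_infinite[of 0] infinite_nat_iff_unbounded by blast
  then show ?thesis using less_iff[OF _ x(1), of z] x(2) by auto
qed

text \<open>Outside the first block \<open>x\<close> is paired with every other point, because it has unboundedly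
  large points on both sides; inside the first block it is paired with only finitely many.\<close>

lemma gamma_pair_iff:
  assumes x: "x \<in> D" "0 < block x"
  shows "gamma_pair A x y \<longleftrightarrow> y \<in> D \<and> y \<noteq> x"
proof
  show "gamma_pair A x y \<Longrightarrow> y \<in> D \<and> y \<noteq> x"
    using linear_lo_irrefl[OF linear_A x(1)] by (auto simp: gamma_pair_def)
next
  assume y: "y \<in> D \<and> y \<noteq> x"
  then consider "R x y" | "R y x" using linear_lo_total[OF linear_A x(1)] by blast
  then show "gamma_pair A x y"
  proof cases
    case 1
    moreover obtain z where "z \<in> D" "R z x" "y < z" using below_unbounded[OF x] by blast
    ultimately show ?thesis using x y unfolding gamma_pair_def by blast
  next
    case 2
    moreover obtain z where "z \<in> D" "R x z" "y < z" using above_unbounded[OF x(1)] by blast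
    ultimately show ?thesis using x y unfolding gamma_pair_def by blast
  qed
qed

lemma finite_gamma_pair_block0: "x \<in> D \<Longrightarrow> block x = 0 \<Longrightarrow> finite {y. gamma_pair A x y}"
proof -
  assume x: "x \<in> D" "block x = 0"
  let ?B = "{z\<in>D. R z x}"
  have "?B \<subseteq> {z\<in>D. block z = 0 \<and> pos z < pos x}" using less_iff[OF _ x(1)] x(2) by auto
  then have "finite ?B" using block_initial_finite finite_subset by blast
  moreover have "{y. gamma_pair A x y} \<subseteq> ?B \<union> (\<Union>z\<in>?B. {..<z})"
    unfolding gamma_pair_def by auto
  ultimately show ?thesis by (meson finite_UN_I finite_Un finite_lessThan finite_subset)
qed

lemma gamma_pair_block0: "x \<in> D \<Longrightarrow> block x = 0 \<Longrightarrow> 0 < pos x \<Longrightarrow> gamma_pair A x (elem 0 0)"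
  using elem[of 0 0] less_iff[OF _ , of "elem 0 0" x] above_unbounded[of x "elem 0 0"]
  unfolding gamma_pair_def by auto

abbreviation G where "G \<equiv> fst (gamma_lo A)"

lemma mem_G: "a \<in> G \<Longrightarrow> pfst a \<in> D \<and> psnd a \<in> D"
  using gamma_pair_mem by (simp add: mem_gamma_lo)

definition slot :: "nat \<Rightarrow> nat" where "slot a = pos (pfst a) * Suc n + block (psnd a)"

lemma slot_less_iff: "a \<in> G \<Longrightarrow> b \<in> G \<Longrightarrow>
    slot a < slot b \<longleftrightarrow> pos (pfst a) < pos (pfst b) \<or>
      (pos (pfst a) = pos (pfst b) \<and> block (psnd a) < block (psnd b))"
  and slot_eq_iff: "a \<in> G \<Longrightarrow> b \<in> G \<Longrightarrow>
    slot a = slot b \<longleftrightarrow> pos (pfst a) = pos (pfst b) \<and> block (psnd a) = block (psnd b)"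
  using mem_G block_le mixed_radix_less_iff mixed_radix_eq_iff
  unfolding slot_def by (metis le_imp_less_Suc)+

text \<open>The pairs over the first block of \<open>A\<close> form a single \<open>\<omega>\<close>, collapsed to the least point.
  The others are indexed by the block of \<open>x\<close> and then by \<open>slot\<close>, which encodes the position
  of \<open>x\<close> and the block of \<open>y\<close>; in the first copy of \<open>\<omega>\<close> this index is shifted by one to make room
  for the least point.\<close>

definition key :: "nat \<Rightarrow> nat" where
  "key a = (if block (pfst a) = 0 then pair 0 0
     else pair (block (pfst a) - 1) (slot a + of_bool (block (pfst a) = 1)))"

lemma key_eq_bottom_iff: "key a = pair 0 0 \<longleftrightarrow> block (pfst a) = 0"
  by (auto simp: key_def)

lemma key_eq_key_iff:
  assumes "a \<in> G" "b \<in> G" "block (pfst a) \<noteq> 0"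
  shows "key b = key a \<longleftrightarrow> pfst b = pfst a \<and> block (psnd b) = block (psnd a)"
proof
  assume eq: "key b = key a"
  then have b: "block (pfst b) \<noteq> 0" using assms(3) key_eq_bottom_iff by metis
  with eq assms(3) have "block (pfst b) - 1 = block (pfst a) - 1"
    and shifted: "slot b + of_bool (block (pfst b) = 1) = slot a + of_bool (block (pfst a) = 1)"
    by (simp_all add: key_def)
  then have "block (pfst b) = block (pfst a)" using b assms(3) by simp
  moreover from this shifted have "slot b = slot a" by simp
  ultimately show "pfst b = pfst a \<and> block (psnd b) = block (psnd a)"
    using slot_eq_iff[OF assms(2,1)] eq_if_block_pos_eq mem_G[OF assms(1)] mem_G[OF assms(2)] by blast
qed (auto simp: key_def slot_def)

lemma key_less_cases:
  assumes less: "snd (times_lo omega_lo n) (key a) (key b)"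
  obtains "block (pfst a) < block (pfst b)" | "block (pfst a) = block (pfst b)" "slot a < slot b"
proof -
  have b0: "block (pfst b) \<noteq> 0"
    using less by (auto simp: key_def less_times_lo omega_lo_def split: if_splits)
  show ?thesis
  proof (cases "block (pfst a) = 0")
    case False
    with less b0 have "block (pfst a) - 1 < block (pfst b) - 1 \<or>
      (block (pfst a) - 1 = block (pfst b) - 1 \<and>
       slot a + of_bool (block (pfst a) = 1) < slot b + of_bool (block (pfst b) = 1))"
      by (simp add: key_def less_times_lo omega_lo_def)
    then show ?thesis
    proof
      assume eq: "block (pfst a) - 1 = block (pfst b) - 1 \<and>
        slot a + of_bool (block (pfst a) = 1) < slot b + of_bool (block (pfst b) = 1)"
      then have "block (pfst a) - 1 = block (pfst b) - 1" ..
      then have "block (pfst a) = block (pfst b)" using False b0 by simp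
      with eq that(2) show ?thesis by simp
    qed (use that(1) in simp)
  qed (use that(1) b0 in simp)
qed

lemma key_mono:
  assumes a: "a \<in> G" and b: "b \<in> G" and less: "snd (times_lo omega_lo n) (key a) (key b)"
  shows "snd (gamma_lo A) a b"
  using less
proof (cases rule: key_less_cases)
  case 1
  then show ?thesis using less_iff mem_G[OF a] mem_G[OF b] by (simp add: less_gamma_lo)
next
  case 2
  note same_block = this
  then consider "pos (pfst a) < pos (pfst b)"
    | "pos (pfst a) = pos (pfst b)" "block (psnd a) < block (psnd b)"
    using slot_less_iff[OF a b] by blast
  then show ?thesis
  proof cases
    case 1
    then show ?thesis using same_block less_iff mem_G[OF a] mem_G[OF b] by (simp add: less_gamma_lo)
  next
    case 2
    then have "pfst a = pfst b" using same_block eq_if_block_pos_eq mem_G[OF a] mem_G[OF b] by blast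
    then show ?thesis using 2 less_iff mem_G[OF a] mem_G[OF b] by (simp add: less_gamma_lo)
  qed
qed

lemma key_image: assumes "0 < n" shows "key ` G = fst (times_lo omega_lo n)"
proof
  show "key ` G \<subseteq> fst (times_lo omega_lo n)"
    using assms mem_G block_le by (fastforce simp: key_def omega_lo_def)
next
  show "fst (times_lo omega_lo n) \<subseteq> key ` G"
  proof
    fix e assume "e \<in> fst (times_lo omega_lo n)"
    then have i: "pfst e < n" by (simp add: mem_times_lo)
    show "e \<in> key ` G"
    proof (cases "pfst e = 0 \<and> psnd e = 0")
      case True
      have "gamma_pair A (elem 0 1) (elem 0 0)" using elem[of 0 1] by (intro gamma_pair_block0) auto
      then have "pair (elem 0 1) (elem 0 0) \<in> G" by (simp add: mem_gamma_lo)
      moreover have "key (pair (elem 0 1) (elem 0 0)) = e"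
        using True elem[of 0 1] pair_pfst_psnd[of e] by (simp add: key_def)
      ultimately show ?thesis by (metis image_eqI)
    next
      case False
      define s where "s = psnd e - of_bool (pfst e = 0)"
      define x where "x = elem (Suc (pfst e)) (s div Suc n)"
      have x: "x \<in> D" "block x = Suc (pfst e)" "pos x = s div Suc n"
        using elem[of "Suc (pfst e)"] i by (simp_all add: x_def)
      have "infinite ({y\<in>D. block y = s mod Suc n} - {x})" using block_infinite by simp
      then obtain y where y: "y \<in> D" "block y = s mod Suc n" "y \<noteq> x"
        using infinite_imp_nonempty by blast
      have "pair x y \<in> G" using gamma_pair_iff[of x y] x y by (simp add: mem_gamma_lo)
      moreover have "slot (pair x y) = s"
        unfolding slot_def using x(3) y(2) by (simp only: fst_conv snd_conv prod_encode_inverse div_mult_mod_eq)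
      moreover have "s + of_bool (pfst e = 0) = psnd e" using False by (auto simp: s_def)
      ultimately have "key (pair x y) = e" using x(2) by (simp add: key_def)
      with \<open>pair x y \<in> G\<close> show ?thesis by (metis image_eqI)
    qed
  qed
qed

lemma omega_like_bottom_fibre: "omega_like {p\<in>G. key p = pair 0 0} (snd (gamma_lo A))"
  unfolding omega_like_def key_eq_bottom_iff
proof
  let ?F = "{p\<in>G. block (pfst p) = 0}"
  let ?f = "\<lambda>k. pair (elem 0 (Suc k)) (elem 0 0)"
  have "range ?f \<subseteq> ?F"
    using elem[of 0] gamma_pair_block0 by (auto simp: mem_gamma_lo)
  moreover have "inj ?f"
  proof (rule injI)
    fix k k' assume "?f k = ?f k'"
    then have "pos (elem 0 (Suc k)) = pos (elem 0 (Suc k'))" by simp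
    then show "k = k'" using elem(3)[of 0] by simp
  qed
  ultimately show "infinite ?F" by (rule infinite_super[OF _ range_inj_infinite])
  show "\<forall>a\<in>?F. finite {b\<in>?F. snd (gamma_lo A) b a}"
  proof
    fix a assume a: "a \<in> ?F"
    let ?X = "{x\<in>D. block x = 0 \<and> pos x < Suc (pos (pfst a))}"
    have fin: "finite (Sigma ?X (\<lambda>x. {y. gamma_pair A x y}))"
      using block_initial_finite finite_gamma_pair_block0 by (intro finite_SigmaI) auto
    have "{b\<in>?F. snd (gamma_lo A) b a} \<subseteq> (\<lambda>(u, v). pair u v) ` Sigma ?X (\<lambda>x. {y. gamma_pair A x y})"
    proof
      fix b assume b: "b \<in> {b\<in>?F. snd (gamma_lo A) b a}"
      then have "pos (pfst b) < Suc (pos (pfst a))"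
        using a less_iff mem_G by (fastforce simp: less_gamma_lo)
      with b have "pfst b \<in> ?X" "gamma_pair A (pfst b) (psnd b)"
        using mem_G by (auto simp: mem_gamma_lo)
      then have "(pfst b, psnd b) \<in> Sigma ?X (\<lambda>x. {y. gamma_pair A x y})"
        unfolding mem_Sigma_iff by simp
      then show "b \<in> (\<lambda>(u, v). pair u v) ` Sigma ?X (\<lambda>x. {y. gamma_pair A x y})"
        by (rule rev_image_eqI) simp
    qed
    then show "finite {b\<in>?F. snd (gamma_lo A) b a}" by (rule finite_subset[OF _ finite_imageI[OF fin]])
  qed
qed

lemma omega_like_block_minus:
  assumes "c \<le> n"
  shows "omega_like ({y\<in>D. block y = c} - {x}) R"
  unfolding omega_like_def
proof
  show "infinite ({y\<in>D. block y = c} - {x})" using block_infinite[OF assms] by simp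
  show "\<forall>y\<in>{y\<in>D. block y = c} - {x}. finite {y'\<in>{y\<in>D. block y = c} - {x}. R y' y}"
  proof
    fix y assume y: "y \<in> {y\<in>D. block y = c} - {x}"
    have "{y'\<in>{y\<in>D. block y = c} - {x}. R y' y} \<subseteq> {y'\<in>D. block y' = c \<and> pos y' < pos y}"
    proof
      fix y' assume "y' \<in> {y'\<in>{y\<in>D. block y = c} - {x}. R y' y}"
      then show "y' \<in> {y'\<in>D. block y' = c \<and> pos y' < pos y}" using y less_iff[of y' y] by auto
    qed
    then show "finite {y'\<in>{y\<in>D. block y = c} - {x}. R y' y}"
      using block_initial_finite finite_subset by blast
  qed
qed

lemma fibre_eq_image:
  assumes x: "x \<in> D" "0 < block x"
  shows "{p\<in>G. pfst p = x \<and> block (psnd p) = c} = pair x ` ({y\<in>D. block y = c} - {x})"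
proof
  show "pair x ` ({y\<in>D. block y = c} - {x}) \<subseteq> {p\<in>G. pfst p = x \<and> block (psnd p) = c}"
  proof (rule image_subsetI)
    fix y assume "y \<in> {y\<in>D. block y = c} - {x}"
    then show "pair x y \<in> {p\<in>G. pfst p = x \<and> block (psnd p) = c}"
      using gamma_pair_iff[OF x, of y] by (simp add: mem_gamma_lo)
  qed
  show "{p\<in>G. pfst p = x \<and> block (psnd p) = c} \<subseteq> pair x ` ({y\<in>D. block y = c} - {x})"
  proof
    fix p assume p: "p \<in> {p\<in>G. pfst p = x \<and> block (psnd p) = c}"
    then have "gamma_pair A x (psnd p)" "block (psnd p) = c" by (auto simp: mem_gamma_lo)
    then have "psnd p \<in> {y\<in>D. block y = c} - {x}" using gamma_pair_iff[OF x] by simp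
    moreover have "p = pair x (psnd p)" using p pair_pfst_psnd[of p] by simp
    ultimately show "p \<in> pair x ` ({y\<in>D. block y = c} - {x})" by (rule rev_image_eqI)
  qed
qed

lemma omega_like_fibre:
  assumes x: "x \<in> D" "0 < block x" and c: "c \<le> n"
  shows "omega_like {p\<in>G. pfst p = x \<and> block (psnd p) = c} (snd (gamma_lo A))"
  unfolding fibre_eq_image[OF x]
proof (rule omega_like_image[OF _ _ omega_like_block_minus[OF c]])
  show "inj_on (pair x) ({y\<in>D. block y = c} - {x})" by (simp add: inj_on_def)
  show "snd (gamma_lo A) (pair x y) (pair x y') \<longleftrightarrow> R y y'" for y y'
    using linear_lo_irrefl[OF linear_A x(1)] by (simp add: less_gamma_lo)
qed

theorem iso_gamma_lo_omega_times:
  assumes "0 < n" shows "iso (gamma_lo A) (omega_times (times_lo omega_lo n))"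
proof (rule iso_omega_times_by_fibres[where \<pi>=key])
  show "linear_lo (gamma_lo A)" "linear_lo (times_lo omega_lo n)"
    by (simp_all add: linear_lo_gamma_lo linear_A linear_lo_times_lo linear_lo_omega)
  show "key ` G = fst (times_lo omega_lo n)" by (rule key_image[OF assms])
  show "\<And>p q. p \<in> G \<Longrightarrow> q \<in> G \<Longrightarrow> snd (times_lo omega_lo n) (key p) (key q) \<Longrightarrow> snd (gamma_lo A) p q"
    by (rule key_mono)
  fix e assume "e \<in> fst (times_lo omega_lo n)"
  then have "e \<in> key ` G" using key_image[OF assms] by simp
  then obtain a where a: "a \<in> G" "key a = e" by (metis imageE)
  show "omega_like {p\<in>G. key p = e} (snd (gamma_lo A))"
  proof (cases "block (pfst a) = 0")
    case True
    then have "e = pair 0 0" using a(2) key_eq_bottom_iff by blast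
    then show ?thesis using omega_like_bottom_fibre by simp
  next
    case False
    have "key p = e \<longleftrightarrow> pfst p = pfst a \<and> block (psnd p) = block (psnd a)" if "p \<in> G" for p
      using key_eq_key_iff[OF a(1) that False] a(2) by simp
    then have "{p\<in>G. key p = e} = {p\<in>G. pfst p = pfst a \<and> block (psnd p) = block (psnd a)}"
      by blast
    moreover have "omega_like {p\<in>G. pfst p = pfst a \<and> block (psnd p) = block (psnd a)} (snd (gamma_lo A))"
      using mem_G[OF a(1)] False block_le by (intro omega_like_fibre) auto
    ultimately show ?thesis by simp
  qed
qed

end

section \<open>The computable embedding\<close>

lemma iso_gamma_lo_if_iso_omega:
  assumes "0 < n" "iso A (times_lo omega_lo (Suc n))"
  shows "iso (gamma_lo A) (times_lo omega2_lo n)"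
proof -
  obtain h where h: "bij_betw h (fst A) (fst (times_lo omega_lo (Suc n)))"
    "\<forall>x\<in>fst A. \<forall>y\<in>fst A. snd A x y \<longleftrightarrow> snd (times_lo omega_lo (Suc n)) (h x) (h y)"
    using assms(2) unfolding iso_def by blast
  interpret omega_multiple n A h
    using h by unfold_locales auto
  show ?thesis
    using iso_trans[OF iso_gamma_lo_omega_times[OF assms(1)] iso_sym[OF iso_times_omega2_omega_times]] .
qed

lemma iso_gamma_lo_if_iso_rev_omega:
  assumes "0 < n" "iso A (times_lo (rev_lo omega_lo) (Suc n))"
  shows "iso (gamma_lo A) (times_lo (rev_lo omega2_lo) n)"
proof -
  have "iso (rev_lo A) (times_lo omega_lo (Suc n))"
    using iso_trans[OF iso_rev_lo[OF assms(2)] iso_rev_lo_times_lo] by simp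
  from iso_gamma_lo_if_iso_omega[OF assms(1) this]
  have "iso (rev_lo (gamma_lo A)) (times_lo omega2_lo n)" by (simp add: gamma_lo_rev_lo)
  then have "iso (gamma_lo A) (rev_lo (times_lo omega2_lo n))"
    using iso_rev_lo by fastforce
  then show ?thesis using iso_trans iso_rev_lo_times_lo by blast
qed

lemma comp_reducible_cls2I:
  assumes "enum_op \<Gamma>" and diag_F: "\<And>A. apply_op \<Gamma> (diag A) = diag (F A)"
    and "\<And>A. iso A X \<Longrightarrow> iso (F A) Y" and "\<And>A. iso A X' \<Longrightarrow> iso (F A) Y'"
    and "\<not> iso X X'" and "\<not> iso Y Y'"
  shows "cls2 X X' \<le>\<^sub>c cls2 Y Y'"
proof -
  let ?pairs = "{(X, Y), (X', Y')}"
  have classes: "\<exists>(U, V)\<in>?pairs. iso A U \<and> iso (F A) V" if "A \<in> cls2 X X'" for A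
  proof -
    from that have "iso A X \<or> iso A X'" by (simp add: cls2_def)
    then show ?thesis using assms(3,4) by blast
  qed
  have pairs: "iso U U' \<longleftrightarrow> iso V V'" if "(U, V) \<in> ?pairs" "(U', V') \<in> ?pairs" for U V U' V'
    using that assms(5,6) iso_refl iso_sym by blast
  have "comp_embedding \<Gamma> (cls2 X X') (cls2 Y Y')"
    unfolding comp_embedding_def
  proof (intro conjI ballI allI impI)
    fix A assume "A \<in> cls2 X X'"
    then obtain U V where "(U, V) \<in> ?pairs" "iso (F A) V" using classes by blast
    then have "F A \<in> cls2 Y Y'" by (auto simp: cls2_def)
    then show "\<exists>B\<in>cls2 Y Y'. apply_op \<Gamma> (diag A) = diag B" using diag_F by blast
  next
    fix A B A' B'
    assume A: "A \<in> cls2 X X'" and B: "B \<in> cls2 X X'"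
      and "apply_op \<Gamma> (diag A) = diag A'" "apply_op \<Gamma> (diag B) = diag B'"
    then have A': "iso A' (F A)" and B': "iso B' (F B)" using diag_F iso_if_diag_eq by metis+
    obtain U V where UV: "(U, V) \<in> ?pairs" "iso A U" "iso (F A) V" using classes[OF A] by blast
    obtain U' V' where UV': "(U', V') \<in> ?pairs" "iso B U'" "iso (F B) V'" using classes[OF B] by blast
    have "iso A B \<longleftrightarrow> iso U U'" by (rule iso_cong[OF UV(2) UV'(2)])
    also have "\<dots> \<longleftrightarrow> iso V V'" by (rule pairs[OF UV(1) UV'(1)])
    also have "\<dots> \<longleftrightarrow> iso A' B'"
      using iso_cong[OF iso_trans[OF A' UV(3)] iso_trans[OF B' UV'(3)]] by simp
    finally show "iso A B \<longleftrightarrow> iso A' B'" .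
  qed (fact assms(1))
  then show ?thesis by (auto simp: comp_reducible_def)
qed

theorem corollary3p3:
  fixes n :: nat
  assumes "n \<ge> 1"
  shows "cls2 (times_lo omega_lo (n + 1)) (times_lo (rev_lo omega_lo) (n + 1))
     \<le>\<^sub>c cls2 (times_lo omega2_lo n) (times_lo (rev_lo omega2_lo) n)"
proof -
  have n: "0 < n" using assms by simp
  have "\<not> iso (times_lo omega_lo (Suc n)) (times_lo (rev_lo omega_lo) (Suc n))"
    using has_least_iso has_least_times_lo[OF has_least_omega]
      not_has_least_times_lo[OF not_has_least_rev_omega] by blast
  moreover have "\<not> iso (times_lo omega2_lo n) (times_lo (rev_lo omega2_lo) n)"
    using has_least_iso has_least_times_lo[OF has_least_omega2 n]
      not_has_least_times_lo[OF not_has_least_rev_omega2] by blast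
  ultimately show ?thesis
    using comp_reducible_cls2I[OF enum_op_Gamma apply_Gamma_diag
        iso_gamma_lo_if_iso_omega[OF n] iso_gamma_lo_if_iso_rev_omega[OF n]]
    by simp
qed

end
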